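(* Let $S$ be a complete star-omega semiring, let $\Sigma$ be an alphabet, and let $\mathcal P=(n,\Gamma,I,M,P,p_0,l)$ be an $S\langle\Sigma\cup\{\epsilon\}\rangle$-$\omega$-pushdown automaton over $(S\langle\langle\Sigma^*\rangle\rangle,S\langle\langle\Sigma^\omega\rangle\rangle)$. Put $x_0=I(M^* )_{p_0,\epsilon}P$, $x_p=(M^* )_{p,\epsilon}$, $z_0=I(M^{\omega,l})_{p_0}$, $z_p=(M^{\omega,l})_p$ ($p\in\Gamma$). Then these satisfy the mixed algebraic system $$x_0=I x_{p_0}P,\qquad x_p=\sum_{\pi=p_1\dots p_k\in\Gamma^*}M_{p,\pi}\,x_{p_1}\cdots x_{p_k}\ (p\in\Gamma),$$ $$z_0=I z_{p_0},\qquad z_p=\sum_{\pi=p_1\dots p_k\in\Gamma^+}M_{p,\pi}\sum_{1\le j\le k}x_{p_1}\cdots x_{p_{j-1}}z_{p_j}\ (p\in\Gamma),$$ where the empty product $x_{p_1}\cdots x_{p_k}$ for $k=0$ is the $n\times n$ identity matrix.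
   Context: A complete semiring-semimodule pair $(S,V)$ (in the sense of Ésik and Kuich, "Modern Automata Theory") consists of a complete starsemiring $S$ (arbitrary sums with infinite associativity/commutativity/distributivity laws, star $s^*=\sum_{j\ge0}s^j$) and a complete $S$-semimodule $V$, with infinite products $\prod_{j\ge1}s_j\in V$ of sequences in $S$ satisfying the axioms of that framework. $S$ is a complete star-omega semiring if $(S,S)$ is a complete semiring-semimodule pair; then $(S\langle\langle\Sigma^*\rangle\rangle,S\langle\langle\Sigma^\omega\rangle\rangle)$ (formal power series over finite, resp. infinite, words) is a complete semiring-semimodule pair. $S\langle\Sigma\cup\{\epsilon\}\rangle$ denotes the series with support contained in $\Sigma\cup\{\epsilon\}$. A pushdown transition matrix $M\in (S'^{n\times n})^{\Gamma^*\times\Gamma^*}$ (here $S'=S\langle\Sigma\cup\{\epsilon\}\rangle$; a $\Gamma^*\times\Gamma^*$ matrix with $n\times n$ blocks over $S'$) satisfies (i) for each $p\in\Gamma$ only finitely many blocks $M_{p,\pi}$ are nonzero, and (ii) $M_{\pi_1,\pi_2}=M_{p,\pi}$ if $\pi_1=p\pi'$, $\pi_2=\pi\pi'$ for some $p\in\Gamma$, $\pi,\pi'\in\Gamma^*$, and $0$ otherwise. An $S'$-$\omega$-pushdown automaton $(n,\Gamma,I,M,P,p_0,l)$ consists of $n\ge1$ (states $1,\dots,n$), an alphabet $\Gamma$, such a matrix $M$, $I\in S'^{1\times n}$, $P\in S'^{n\times1}$, $p_0\in\Gamma$ and $l\in\{0,\dots,n\}$. $M^*=\sum_{m\ge0}M^m$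 with blocks $(M^* )_{\pi,\pi'}$; with $P_l=\{(j_1,j_2,\dots)\in\{1,\dots,n\}^\omega\mid j_t\le l\text{ for infinitely many }t\}$, $M^{\omega,l}\in ((S\langle\langle\Sigma^\omega\rangle\rangle)^n)^{\Gamma^*}$ is given by $((M^{\omega,l})_\pi)_i=\sum_{\pi_1,\pi_2,\ldots\in\Gamma^*}\sum_{(j_1,j_2,\ldots)\in P_l}(M_{\pi,\pi_1})_{i,j_1}(M_{\pi_1,\pi_2})_{j_1,j_2}\cdots$. *)

theory Defs
  imports Main
begin

section \<open>Complete semirings (sums indexed by subsets of a fixed universe of size continuum)\<close>

type_synonym idx = "nat \<Rightarrow> nat"
type_synonym 's csum_op = "(idx \<Rightarrow> 's) \<Rightarrow> idx set \<Rightarrow> 's"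

definition complete_semiring :: "'s::semiring_1 csum_op \<Rightarrow> bool" where
  "complete_semiring cs \<longleftrightarrow>
     (\<forall>f g I. (\<forall>i\<in>I. f i = g i) \<longrightarrow> cs f I = cs g I) \<and>
     (\<forall>f. cs f {} = 0) \<and>
     (\<forall>f i. cs f {i} = f i) \<and>
     (\<forall>f i j. i \<noteq> j \<longrightarrow> cs f {i, j} = f i + f j) \<and>
     (\<forall>f I J (Q :: idx \<Rightarrow> idx set).
        I = (\<Union>j\<in>J. Q j) \<and> (\<forall>j\<in>J. \<forall>j'\<in>J. j \<noteq> j' \<longrightarrow> Q j \<inter> Q j' = {})
        \<longrightarrow> cs f I = cs (\<lambda>j. cs f (Q j)) J) \<and>
     (\<forall>f I c. cs (\<lambda>i. f i * c) I = cs f I * c) \<and>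
     (\<forall>f I c. cs (\<lambda>i. c * f i) I = c * cs f I)"

definition gsum :: "'s csum_op \<Rightarrow> ('i \<Rightarrow> 's) \<Rightarrow> 'i set \<Rightarrow> 's" where
  "gsum cs f I = (let g = (SOME g :: 'i \<Rightarrow> idx. inj_on g I)
                  in cs (\<lambda>u. f (the_inv_into I g u)) (g ` I))"

text \<open>Complete star-omega semiring: (S,S) is a complete semiring-semimodule pair;
  the infinite product of s_1 s_2 ... is ip s with s j = s_(j+1).\<close>
definition complete_star_omega_semiring ::
  "'s::semiring_1 csum_op \<Rightarrow> ((nat \<Rightarrow> 's) \<Rightarrow> 's) \<Rightarrow> bool" where
  "complete_star_omega_semiring cs ip \<longleftrightarrow>
     complete_semiring cs \<and>
     (\<forall>s. ip s = s 0 * ip (\<lambda>j. s (Suc j))) \<and>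
     (\<forall>s c. strict_mono c \<and> c 0 = 0 \<longrightarrow>
        ip s = ip (\<lambda>j. prod_list (map s [c j..<c (Suc j)]))) \<and>
     (\<forall>(Is :: nat \<Rightarrow> idx set) (f :: nat \<Rightarrow> idx \<Rightarrow> 's).
        ip (\<lambda>j. cs (f j) (Is j)) =
        gsum cs (\<lambda>\<sigma>. ip (\<lambda>j. f j (\<sigma> j))) {\<sigma>. \<forall>j. \<sigma> j \<in> Is j})"

definition s_zero :: "'a list \<Rightarrow> 's::zero" where
  "s_zero = (\<lambda>_. 0)"

definition s_one :: "'a list \<Rightarrow> 's::semiring_1" where
  "s_one = (\<lambda>w. if w = [] then 1 else 0)"

definition s_mult :: "('a list \<Rightarrow> 's::semiring_1) \<Rightarrow> ('a list \<Rightarrow> 's) \<Rightarrow> 'a list \<Rightarrow> 's" where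
  "s_mult r1 r2 = (\<lambda>w. \<Sum>k\<in>{0..length w}. r1 (take k w) * r2 (drop k w))"

definition s_act :: "'s::semiring_1 csum_op \<Rightarrow> ('a list \<Rightarrow> 's) \<Rightarrow> ((nat \<Rightarrow> 'a) \<Rightarrow> 's)
                      \<Rightarrow> (nat \<Rightarrow> 'a) \<Rightarrow> 's" where
  "s_act cs r s = (\<lambda>w. gsum cs (\<lambda>k::nat. r (map w [0..<k]) * s (\<lambda>i. w (k + i))) UNIV)"

definition factorization :: "(nat \<Rightarrow> 'a list) \<Rightarrow> (nat \<Rightarrow> 'a) \<Rightarrow> bool" where
  "factorization u w \<longleftrightarrow>
     (let c = (\<lambda>j. \<Sum>i<j. length (u i))
      in (\<forall>j. u j = map w [c j..<c (Suc j)]) \<and> (\<forall>k. \<exists>j. k \<le> c j))"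

definition s_iprod :: "'s::semiring_1 csum_op \<Rightarrow> ((nat \<Rightarrow> 's) \<Rightarrow> 's)
                        \<Rightarrow> (nat \<Rightarrow> 'a list \<Rightarrow> 's) \<Rightarrow> (nat \<Rightarrow> 'a) \<Rightarrow> 's" where
  "s_iprod cs ip r = (\<lambda>w. gsum cs (\<lambda>u. ip (\<lambda>j. r j (u j))) {u. factorization u w})"

text \<open>Series in S<Sigma \<union> {epsilon}>.\<close>
definition in_S_eps :: "('a list \<Rightarrow> 's::zero) \<Rightarrow> bool" where
  "in_S_eps r \<longleftrightarrow> (\<forall>w. r w \<noteq> 0 \<longrightarrow> length w \<le> 1)"

section \<open>n x n matrices (indices 1..n) over finite-word series\<close>

type_synonym ('a, 's) blk = "nat \<Rightarrow> nat \<Rightarrow> 'a list \<Rightarrow> 's"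

definition m_mult :: "nat \<Rightarrow> ('a, 's::semiring_1) blk \<Rightarrow> ('a, 's) blk \<Rightarrow> ('a, 's) blk" where
  "m_mult n A B = (\<lambda>i j w. \<Sum>k\<in>{1..n}. s_mult (A i k) (B k j) w)"

definition m_one :: "('a, 's::semiring_1) blk" where
  "m_one = (\<lambda>i j. if i = j then s_one else s_zero)"

definition m_zero :: "('a, 's::semiring_1) blk" where
  "m_zero = (\<lambda>i j. s_zero)"

definition m_prod :: "nat \<Rightarrow> ('a, 's::semiring_1) blk list \<Rightarrow> ('a, 's) blk" where
  "m_prod n As = foldr (m_mult n) As m_one"

definition blk_eq :: "nat \<Rightarrow> ('a, 's) blk \<Rightarrow> ('a, 's) blk \<Rightarrow> bool" where
  "blk_eq n A B \<longleftrightarrow> (\<forall>i\<in>{1..n}. \<forall>j\<in>{1..n}. A i j = B i j)"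

definition m_act :: "'s::semiring_1 csum_op \<Rightarrow> nat \<Rightarrow> ('a, 's) blk
                     \<Rightarrow> (nat \<Rightarrow> (nat \<Rightarrow> 'a) \<Rightarrow> 's) \<Rightarrow> nat \<Rightarrow> (nat \<Rightarrow> 'a) \<Rightarrow> 's" where
  "m_act cs n A z = (\<lambda>i w. \<Sum>k\<in>{1..n}. s_act cs (A i k) (z k) w)"

definition r_mult :: "nat \<Rightarrow> (nat \<Rightarrow> 'a list \<Rightarrow> 's::semiring_1) \<Rightarrow> ('a, 's) blk
                      \<Rightarrow> nat \<Rightarrow> 'a list \<Rightarrow> 's" where
  "r_mult n v A = (\<lambda>j w. \<Sum>i\<in>{1..n}. s_mult (v i) (A i j) w)"

definition rc_mult :: "nat \<Rightarrow> (nat \<Rightarrow> 'a list \<Rightarrow> 's::semiring_1) \<Rightarrow> (nat \<Rightarrow> 'a list \<Rightarrow> 's)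
                       \<Rightarrow> 'a list \<Rightarrow> 's" where
  "rc_mult n v u = (\<lambda>w. \<Sum>j\<in>{1..n}. s_mult (v j) (u j) w)"

definition r_act :: "'s::semiring_1 csum_op \<Rightarrow> nat \<Rightarrow> (nat \<Rightarrow> 'a list \<Rightarrow> 's)
                     \<Rightarrow> (nat \<Rightarrow> (nat \<Rightarrow> 'a) \<Rightarrow> 's) \<Rightarrow> (nat \<Rightarrow> 'a) \<Rightarrow> 's" where
  "r_act cs n v z = (\<lambda>w. \<Sum>i\<in>{1..n}. s_act cs (v i) (z i) w)"

text \<open>M \<pi>1 \<pi>2 is the block M_{\<pi>1,\<pi>2}; M [p] \<pi> is M_{p,\<pi>}.\<close>
definition pushdown_matrix :: "nat \<Rightarrow> ('g list \<Rightarrow> 'g list \<Rightarrow> ('a, 's::semiring_1) blk) \<Rightarrow> bool" where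
  "pushdown_matrix n M \<longleftrightarrow>
     (\<forall>p. finite {\<pi>. \<not> blk_eq n (M [p] \<pi>) m_zero}) \<and>
     (\<forall>p \<pi> \<pi>'. blk_eq n (M (p # \<pi>') (\<pi> @ \<pi>')) (M [p] \<pi>)) \<and>
     (\<forall>\<pi>1 \<pi>2. \<not> (\<exists>p \<pi> \<pi>'. \<pi>1 = p # \<pi>' \<and> \<pi>2 = \<pi> @ \<pi>') \<longrightarrow> blk_eq n (M \<pi>1 \<pi>2) m_zero)"

definition omega_pda ::
  "nat \<Rightarrow> ('g list \<Rightarrow> 'g list \<Rightarrow> ('a, 's::semiring_1) blk) \<Rightarrow> (nat \<Rightarrow> 'a list \<Rightarrow> 's)
   \<Rightarrow> (nat \<Rightarrow> 'a list \<Rightarrow> 's) \<Rightarrow> 'g \<Rightarrow> nat \<Rightarrow> bool" where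
  "omega_pda n M I P p0 l \<longleftrightarrow>
     1 \<le> n \<and> l \<le> n \<and> pushdown_matrix n M \<and>
     (\<forall>\<pi>1 \<pi>2. \<forall>i\<in>{1..n}. \<forall>j\<in>{1..n}. in_S_eps (M \<pi>1 \<pi>2 i j)) \<and>
     (\<forall>i\<in>{1..n}. in_S_eps (I i) \<and> in_S_eps (P i))"

definition M_mult :: "'s::semiring_1 csum_op \<Rightarrow> nat \<Rightarrow> ('g list \<Rightarrow> 'g list \<Rightarrow> ('a, 's) blk)
     \<Rightarrow> ('g list \<Rightarrow> 'g list \<Rightarrow> ('a, 's) blk) \<Rightarrow> 'g list \<Rightarrow> 'g list \<Rightarrow> ('a, 's) blk" where
  "M_mult cs n A B = (\<lambda>\<pi>1 \<pi>2 i j w. gsum cs (\<lambda>\<pi>. m_mult n (A \<pi>1 \<pi>) (B \<pi> \<pi>2) i j w) UNIV)"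

definition M_one :: "'g list \<Rightarrow> 'g list \<Rightarrow> ('a, 's::semiring_1) blk" where
  "M_one = (\<lambda>\<pi>1 \<pi>2. if \<pi>1 = \<pi>2 then m_one else m_zero)"

primrec M_pow :: "'s::semiring_1 csum_op \<Rightarrow> nat \<Rightarrow> ('g list \<Rightarrow> 'g list \<Rightarrow> ('a, 's) blk)
     \<Rightarrow> nat \<Rightarrow> 'g list \<Rightarrow> 'g list \<Rightarrow> ('a, 's) blk" where
  "M_pow cs n M 0 = M_one"
| "M_pow cs n M (Suc m) = M_mult cs n (M_pow cs n M m) M"

definition M_star :: "'s::semiring_1 csum_op \<Rightarrow> nat \<Rightarrow> ('g list \<Rightarrow> 'g list \<Rightarrow> ('a, 's) blk)
     \<Rightarrow> 'g list \<Rightarrow> 'g list \<Rightarrow> ('a, 's) blk" where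
  "M_star cs n M = (\<lambda>\<pi>1 \<pi>2 i j w. gsum cs (\<lambda>m::nat. M_pow cs n M m \<pi>1 \<pi>2 i j w) UNIV)"

text \<open>P_l, with j_(t+1) written js t.\<close>
definition P_l :: "nat \<Rightarrow> nat \<Rightarrow> (nat \<Rightarrow> nat) set" where
  "P_l n l = {js. (\<forall>t. js t \<in> {1..n}) \<and> infinite {t. js t \<le> l}}"

text \<open>M^{omega,l}: (M_omega cs ip n l M \<pi> i) is ((M^{omega,l})_\<pi>)_i; \<pi>_(t+1) is \<pi>s t.\<close>
definition M_omega :: "'s::semiring_1 csum_op \<Rightarrow> ((nat \<Rightarrow> 's) \<Rightarrow> 's) \<Rightarrow> nat \<Rightarrow> nat
     \<Rightarrow> ('g list \<Rightarrow> 'g list \<Rightarrow> ('a, 's) blk) \<Rightarrow> 'g list \<Rightarrow> nat \<Rightarrow> (nat \<Rightarrow> 'a) \<Rightarrow> 's" where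
  "M_omega cs ip n l M = (\<lambda>\<pi> i w.
     gsum cs (\<lambda>\<pi>s :: nat \<Rightarrow> 'g list.
       gsum cs (\<lambda>js.
         s_iprod cs ip (\<lambda>t. M (if t = 0 then \<pi> else \<pi>s (t - 1)) (\<pi>s t)
                               (if t = 0 then i else js (t - 1)) (js t)) w)
       (P_l n l)) UNIV)"

end

theory Submission
  imports Defs "HOL-Library.Countable" "HOL-Library.Omega_Words_Fun"
begin

text \<open>A pushdown transition matrix is invariant under appending a common suffix to both stacks,
  so a computation from a stack \<open>\<gamma>\<beta>\<close> with nonempty \<open>\<gamma>\<close> behaves like a computation from \<open>\<gamma>\<close>
  until \<open>\<beta>\<close> is exposed for the first time. Consequently a finite computation from
  \<open>p\<^sub>1\<dots>p\<^sub>k\<close> to the empty stack splits uniquely into computations emptying \<open>p\<^sub>1\<close>, \<dots>, \<open>p\<^sub>k\<close>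
  in turn, so \<open>(M\<^sup>*)\<^sub>\<pi>\<^sub>,\<^sub>\<epsilon> = x\<^sub>p\<^sub>1 \<cdots> x\<^sub>p\<^sub>k\<close>; and an infinite computation from \<open>\<gamma>\<beta>\<close> either never
  exposes \<open>\<beta>\<close> or first empties \<open>\<gamma>\<close> and then runs on from \<open>\<beta>\<close>, so
  \<open>(M\<^sup>\<omega>\<^sup>,\<^sup>l)\<^sub>\<gamma>\<^sub>\<beta> = (M\<^sup>\<omega>\<^sup>,\<^sup>l)\<^sub>\<gamma> + (M\<^sup>*)\<^sub>\<gamma>\<^sub>,\<^sub>\<epsilon> (M\<^sup>\<omega>\<^sup>,\<^sup>l)\<^sub>\<beta>\<close>. Splitting off the first transition
  \<open>M\<^sub>p\<^sub>,\<^sub>\<pi>\<close> of a computation from \<open>p\<close> then gives the equations for \<open>x\<^sub>p\<close> and \<open>z\<^sub>p\<close>; those for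
  \<open>x\<^sub>0\<close> and \<open>z\<^sub>0\<close> hold by definition.\<close>

section \<open>Complete sums over arbitrary index types\<close>

definition idx_embeddable :: "'i itself \<Rightarrow> bool" where
  "idx_embeddable _ \<longleftrightarrow> (\<exists>g::'i \<Rightarrow> idx. inj g)"

lemma idx_embeddable_countable [simp]: "idx_embeddable TYPE('i::countable)"
  unfolding idx_embeddable_def
  by (rule exI[of _ "\<lambda>x _. to_nat x"]) (auto simp: inj_def fun_eq_iff)

lemma idx_embeddable_fun [simp]: "idx_embeddable TYPE(nat \<Rightarrow> 'i::countable)"
  unfolding idx_embeddable_def
  by (rule exI[of _ "\<lambda>x k. to_nat (x k)"]) (auto simp: inj_def fun_eq_iff)

lemma idx_embeddable_prod [simp]:
  assumes "idx_embeddable TYPE('i)" "idx_embeddable TYPE('j)"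
  shows "idx_embeddable TYPE('i \<times> 'j)"
proof -
  obtain g :: "'i \<Rightarrow> idx" where g: "inj g" using assms(1) unfolding idx_embeddable_def by blast
  obtain h :: "'j \<Rightarrow> idx" where h: "inj h" using assms(2) unfolding idx_embeddable_def by blast
  have "inj (\<lambda>(a, b) k. prod_encode (g a k, h b k))"
  proof (rule injI, clarsimp)
    fix a b a' b' assume "(\<lambda>k. prod_encode (g a k, h b k)) = (\<lambda>k. prod_encode (g a' k, h b' k))"
    hence "\<forall>k. g a k = g a' k \<and> h b k = h b' k"
      by (metis prod_encode_eq prod.inject)
    hence "g a = g a'" "h b = h b'" by auto
    thus "a = a' \<and> b = b'" using g h by (auto dest: injD)
  qed
  thus ?thesis unfolding idx_embeddable_def by blast
qed

lemma idx_embeddable_inj_on: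
  assumes "idx_embeddable TYPE('i)" obtains g :: "'i \<Rightarrow> idx" where "inj_on g A"
  using assms unfolding idx_embeddable_def by (blast intro: inj_on_subset)

locale complete_sum =
  fixes cs :: "'s::semiring_1 csum_op"
  assumes complete: "complete_semiring cs"
begin

lemmas complete_unfolded = complete[unfolded complete_semiring_def]

lemma cs_cong: "(\<And>i. i \<in> I \<Longrightarrow> f i = g i) \<Longrightarrow> cs f I = cs g I"
  using complete_unfolded[THEN conjunct1] by blast

lemma cs_empty: "cs f {} = 0"
  using complete_unfolded[THEN conjunct2, THEN conjunct1] by blast

lemma cs_singleton: "cs f {i} = f i"
  using complete_unfolded[THEN conjunct2, THEN conjunct2, THEN conjunct1] by blast

lemma cs_two: "i \<noteq> j \<Longrightarrow> cs f {i, j} = f i + f j"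
  using complete_unfolded[THEN conjunct2, THEN conjunct2, THEN conjunct2, THEN conjunct1] by blast

lemma cs_partition:
  "I = (\<Union>j\<in>J. Q j) \<Longrightarrow> (\<And>j j'. j \<in> J \<Longrightarrow> j' \<in> J \<Longrightarrow> j \<noteq> j' \<Longrightarrow> Q j \<inter> Q j' = {})
   \<Longrightarrow> cs f I = cs (\<lambda>j. cs f (Q j)) J"
  using complete_unfolded[THEN conjunct2, THEN conjunct2, THEN conjunct2, THEN conjunct2, THEN conjunct1] by blast

lemma cs_distrib_right: "cs (\<lambda>i. f i * c) I = cs f I * c"
  using complete_unfolded[THEN conjunct2, THEN conjunct2, THEN conjunct2, THEN conjunct2, THEN conjunct2, THEN conjunct1] by blast

lemma cs_distrib_left: "cs (\<lambda>i. c * f i) I = c * cs f I"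
  using complete_unfolded[THEN conjunct2, THEN conjunct2, THEN conjunct2, THEN conjunct2, THEN conjunct2, THEN conjunct2] by blast

lemma cs_reindex:
  assumes "inj_on h J" shows "cs f (h ` J) = cs (\<lambda>j. f (h j)) J"
proof -
  have "cs f (h ` J) = cs (\<lambda>j. cs f {h j}) J"
    by (rule cs_partition) (use assms in \<open>auto dest: inj_onD\<close>)
  thus ?thesis by (simp add: cs_singleton)
qed

lemma gsum_conv_cs:
  assumes h: "inj_on (h::'i \<Rightarrow> idx) A"
  shows "gsum cs f A = cs (\<lambda>u. f (the_inv_into A h u)) (h ` A)"
proof -
  define g where "g = (SOME g :: 'i \<Rightarrow> idx. inj_on g A)"
  have g: "inj_on g A" unfolding g_def using someI_ex[of "\<lambda>g::'i\<Rightarrow>idx. inj_on g A"] h by blast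
  define \<phi> where "\<phi> = h \<circ> the_inv_into A g"
  have \<phi>: "inj_on \<phi> (g ` A)"
    unfolding \<phi>_def by (rule comp_inj_on) (simp_all add: inj_on_the_inv_into g h)
  have "h ` A = \<phi> ` g ` A" unfolding \<phi>_def using g by (auto simp: the_inv_into_f_f image_iff)
  hence "cs (\<lambda>u. f (the_inv_into A h u)) (h ` A) = cs (\<lambda>u. f (the_inv_into A h u)) (\<phi> ` g ` A)"
    by simp
  also have "\<dots> = cs (\<lambda>u. f (the_inv_into A h (\<phi> u))) (g ` A)" by (rule cs_reindex[OF \<phi>])
  also have "\<dots> = cs (\<lambda>u. f (the_inv_into A g u)) (g ` A)"
    by (rule cs_cong) (auto simp: \<phi>_def the_inv_into_f_f[OF h] the_inv_into_f_f[OF g])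
  finally show ?thesis unfolding gsum_def g_def Let_def by simp
qed

lemma gsum_cong:
  assumes "idx_embeddable TYPE('i)" "\<And>a. a \<in> A \<Longrightarrow> f a = g a"
  shows "gsum cs f (A::'i set) = gsum cs g A"
proof -
  obtain h :: "'i \<Rightarrow> idx" where h: "inj_on h A" using idx_embeddable_inj_on[OF assms(1)] .
  show ?thesis unfolding gsum_conv_cs[OF h]
    by (rule cs_cong) (auto simp: the_inv_into_f_f[OF h] assms(2))
qed

lemma gsum_reindex:
  assumes "idx_embeddable TYPE('i)" "inj_on (k::'j \<Rightarrow> 'i) B"
  shows "gsum cs f (k ` B) = gsum cs (\<lambda>b. f (k b)) B"
proof -
  obtain h :: "'i \<Rightarrow> idx" where h: "inj_on h (k ` B)" using idx_embeddable_inj_on[OF assms(1)] .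
  have hk: "inj_on (h \<circ> k) B" by (rule comp_inj_on[OF assms(2) h])
  have hk': "b \<in> B \<Longrightarrow> the_inv_into B (h \<circ> k) (h (k b)) = b" for b
    using the_inv_into_f_f[OF hk] by simp
  show ?thesis unfolding gsum_conv_cs[OF h] gsum_conv_cs[OF hk] image_comp[symmetric]
    by (rule cs_cong) (auto simp: the_inv_into_f_f[OF h] hk')
qed

lemma gsum_UN_disjoint:
  assumes "idx_embeddable TYPE('i)" "idx_embeddable TYPE('j)"
    and disj: "\<And>j j'. j \<in> J \<Longrightarrow> j' \<in> J \<Longrightarrow> j \<noteq> j' \<Longrightarrow> Q j \<inter> Q j' = {}"
  shows "gsum cs f (\<Union>j\<in>(J::'j set). (Q j :: 'i set)) = gsum cs (\<lambda>j. gsum cs f (Q j)) J"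
proof -
  define U where "U = (\<Union>j\<in>J. Q j)"
  obtain g :: "'i \<Rightarrow> idx" where g: "inj_on g U" using idx_embeddable_inj_on[OF assms(1)] .
  obtain e :: "'j \<Rightarrow> idx" where e: "inj_on e J" using idx_embeddable_inj_on[OF assms(2)] .
  have gQ: "j \<in> J \<Longrightarrow> inj_on g (Q j)" for j by (rule inj_on_subset[OF g]) (auto simp: U_def)
  have gU: "x \<in> Q j \<Longrightarrow> j \<in> J \<Longrightarrow> the_inv_into U g (g x) = x" for x j
    by (rule the_inv_into_f_f[OF g]) (auto simp: U_def)
  have "gsum cs f U = cs (\<lambda>u. f (the_inv_into U g u)) (g ` U)" by (rule gsum_conv_cs[OF g])
  also have "\<dots> = cs (\<lambda>u. cs (\<lambda>u. f (the_inv_into U g u)) (g ` Q (the_inv_into J e u))) (e ` J)"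
  proof (rule cs_partition)
    show "g ` U = (\<Union>u\<in>e ` J. g ` Q (the_inv_into J e u))"
      by (auto simp: U_def the_inv_into_f_f[OF e])
    fix u u' assume "u \<in> e ` J" "u' \<in> e ` J" "u \<noteq> u'"
    then obtain j j' where jj: "j \<in> J" "j' \<in> J" "u = e j" "u' = e j'" "j \<noteq> j'" by auto
    hence "Q j \<inter> Q j' = {}" using disj by auto
    moreover have "Q j \<subseteq> U" "Q j' \<subseteq> U" using jj by (auto simp: U_def)
    ultimately show "g ` Q (the_inv_into J e u) \<inter> g ` Q (the_inv_into J e u') = {}"
      using jj g by (auto simp: the_inv_into_f_f[OF e] inj_on_def) blast
  qed
  also have "\<dots> = cs (\<lambda>u. gsum cs f (Q (the_inv_into J e u))) (e ` J)"
  proof (rule cs_cong)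
    fix u assume "u \<in> e ` J"
    then obtain j where j: "j \<in> J" "u = e j" by auto
    show "cs (\<lambda>u. f (the_inv_into U g u)) (g ` Q (the_inv_into J e u)) = gsum cs f (Q (the_inv_into J e u))"
      unfolding j the_inv_into_f_f[OF e j(1)] gsum_conv_cs[OF gQ[OF j(1)]]
      by (rule cs_cong) (use j in \<open>auto simp: the_inv_into_f_f[OF gQ[OF j(1)]] gU\<close>)
  qed
  also have "\<dots> = gsum cs (\<lambda>j. gsum cs f (Q j)) J" by (rule gsum_conv_cs[OF e, symmetric])
  finally show ?thesis unfolding U_def .
qed

lemma gsum_empty: "gsum cs f {} = 0"
  using gsum_conv_cs[of "\<lambda>_. (\<lambda>_. 0)" "{}" f] by (simp add: cs_empty)

lemma gsum_singleton:
  assumes "idx_embeddable TYPE('i)" shows "gsum cs f {x::'i} = f x"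
proof -
  obtain h :: "'i \<Rightarrow> idx" where h: "inj_on h {x}" using idx_embeddable_inj_on[OF assms] .
  show ?thesis unfolding gsum_conv_cs[OF h] by (simp add: cs_singleton the_inv_into_f_f[OF h])
qed

lemma gsum_two:
  assumes "idx_embeddable TYPE('i)" "x \<noteq> y" shows "gsum cs f {x::'i, y} = f x + f y"
proof -
  obtain h :: "'i \<Rightarrow> idx" where h: "inj_on h {x, y}" using idx_embeddable_inj_on[OF assms(1)] .
  have "h x \<noteq> h y" using h assms(2) by (auto simp: inj_on_def)
  thus ?thesis unfolding gsum_conv_cs[OF h] by (simp add: cs_two the_inv_into_f_f[OF h])
qed

lemma gsum_distrib_right:
  assumes "idx_embeddable TYPE('i)" shows "gsum cs (\<lambda>a. f a * c) (A::'i set) = gsum cs f A * c"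
proof -
  obtain h :: "'i \<Rightarrow> idx" where h: "inj_on h A" using idx_embeddable_inj_on[OF assms] .
  show ?thesis unfolding gsum_conv_cs[OF h] by (rule cs_distrib_right)
qed

lemma gsum_distrib_left:
  assumes "idx_embeddable TYPE('i)" shows "gsum cs (\<lambda>a. c * f a) (A::'i set) = c * gsum cs f A"
proof -
  obtain h :: "'i \<Rightarrow> idx" where h: "inj_on h A" using idx_embeddable_inj_on[OF assms] .
  show ?thesis unfolding gsum_conv_cs[OF h] by (rule cs_distrib_left)
qed

lemma gsum_neutral:
  assumes "idx_embeddable TYPE('i)" "\<And>a. a \<in> A \<Longrightarrow> f a = 0" shows "gsum cs f (A::'i set) = 0"
proof -
  have "gsum cs f A = gsum cs (\<lambda>a. (0::'s) * 0) A" by (rule gsum_cong) (use assms in auto)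
  also have "\<dots> = gsum cs (\<lambda>a. (0::'s)) A * 0" by (rule gsum_distrib_right[OF assms(1)])
  finally show ?thesis by simp
qed

lemma gsum_Un_disjoint:
  assumes "idx_embeddable TYPE('i)" "A \<inter> B = {}"
  shows "gsum cs f (A \<union> (B::'i set)) = gsum cs f A + gsum cs f B"
proof -
  have "A \<union> B = (\<Union>b\<in>{True, False}. if b then A else B)" by auto
  also have "gsum cs f \<dots> = gsum cs (\<lambda>b. gsum cs f (if b then A else B)) {True, False}"
    by (rule gsum_UN_disjoint[OF assms(1) idx_embeddable_countable]) (use assms(2) in auto)
  finally show ?thesis using gsum_two[of True False] by simp
qed

lemma gsum_eq_sum:
  assumes "idx_embeddable TYPE('i)" "finite (A::'i set)" shows "gsum cs f A = sum f A"
  using assms(2)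
proof induct
  case (insert x A)
  thus ?case using gsum_Un_disjoint[OF assms(1), of "{x}" A f] by (simp add: gsum_singleton[OF assms(1)])
qed (simp add: gsum_empty)

lemma gsum_mono_neutral:
  assumes "idx_embeddable TYPE('i)" "B \<subseteq> (A::'i set)" "\<And>a. a \<in> A \<Longrightarrow> a \<notin> B \<Longrightarrow> f a = 0"
  shows "gsum cs f A = gsum cs f B"
proof -
  have "A = B \<union> (A - B)" using assms(2) by auto
  hence "gsum cs f A = gsum cs f B + gsum cs f (A - B)"
    using gsum_Un_disjoint[OF assms(1), of B "A - B" f] by auto
  also have "gsum cs f (A - B) = 0" by (rule gsum_neutral) (use assms in auto)
  finally show ?thesis by simp
qed

lemma gsum_Sigma:
  assumes "idx_embeddable TYPE('i)" "idx_embeddable TYPE('j)"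
  shows "gsum cs (\<lambda>a. gsum cs (f a) (B a)) (A::'i set)
       = gsum cs (\<lambda>p. f (fst p) (snd p)) (Sigma A (B::'i \<Rightarrow> 'j set))"
proof -
  have "Sigma A B = (\<Union>a\<in>A. Pair a ` B a)" by auto
  hence "gsum cs (\<lambda>p. f (fst p) (snd p)) (Sigma A B)
       = gsum cs (\<lambda>a. gsum cs (\<lambda>p. f (fst p) (snd p)) (Pair a ` B a)) A"
    using gsum_UN_disjoint[OF idx_embeddable_prod[OF assms] assms(1), of A "\<lambda>a. Pair a ` B a"] by auto
  also have "\<dots> = gsum cs (\<lambda>a. gsum cs (f a) (B a)) A"
    by (rule gsum_cong[OF assms(1)], subst gsum_reindex[OF idx_embeddable_prod[OF assms]])
       (auto simp: inj_on_def)
  finally show ?thesis by simp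
qed

lemma gsum_swap:
  assumes "idx_embeddable TYPE('i)" "idx_embeddable TYPE('j)"
  shows "gsum cs (\<lambda>a. gsum cs (f a) B) (A::'i set) = gsum cs (\<lambda>b. gsum cs (\<lambda>a. f a b) A) (B::'j set)"
proof -
  have "gsum cs (\<lambda>a. gsum cs (f a) B) A = gsum cs (\<lambda>p. f (fst p) (snd p)) (A \<times> B)"
    by (rule gsum_Sigma[OF assms])
  also have "A \<times> B = prod.swap ` (B \<times> A)" by auto
  also have "gsum cs (\<lambda>p. f (fst p) (snd p)) (prod.swap ` (B \<times> A))
           = gsum cs (\<lambda>p. f (snd p) (fst p)) (B \<times> A)"
    by (subst gsum_reindex[OF idx_embeddable_prod[OF assms]]) auto
  also have "\<dots> = gsum cs (\<lambda>b. gsum cs (\<lambda>a. f a b) A) B"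
    by (rule gsum_Sigma[OF assms(2,1), symmetric])
  finally show ?thesis .
qed

lemma gsum_add:
  assumes "idx_embeddable TYPE('i)"
  shows "gsum cs (\<lambda>a. f a + g a) (A::'i set) = gsum cs f A + gsum cs g A"
proof -
  have "gsum cs (\<lambda>a. f a + g a) A = gsum cs (\<lambda>a. gsum cs (\<lambda>b. if b then f a else g a) {True, False}) A"
    by (simp add: gsum_two)
  also have "\<dots> = gsum cs (\<lambda>b. gsum cs (\<lambda>a. if b then f a else g a) A) {True, False}"
    by (rule gsum_swap[OF assms idx_embeddable_countable])
  finally show ?thesis by (simp add: gsum_two)
qed

lemma gsum_sum_swap:
  assumes "idx_embeddable TYPE('i)" "finite K"
  shows "gsum cs (\<lambda>a. \<Sum>k\<in>K. f a k) (A::'i set) = (\<Sum>k\<in>K. gsum cs (\<lambda>a. f a k) A)"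
  using assms(2) by induct (simp_all add: gsum_neutral[OF assms(1)] gsum_add[OF assms(1)])

lemma gsum_Cauchy_product:
  "gsum cs (\<lambda>a. gsum cs (F a) UNIV) UNIV = gsum cs (\<lambda>m. \<Sum>a\<le>m. F a (m - a)) (UNIV :: nat set)"
proof -
  have diag: "(\<lambda>p. (fst p + snd p, fst p)) ` (UNIV \<times> UNIV) = (SIGMA m:UNIV. {..m::nat})"
    by (auto simp: image_iff le_iff_add)
  have "gsum cs (\<lambda>a. gsum cs (F a) UNIV) UNIV = gsum cs (\<lambda>p. F (fst p) (snd p)) (UNIV \<times> UNIV)"
    by (rule gsum_Sigma) simp_all
  also have "\<dots> = gsum cs (\<lambda>q. F (snd q) (fst q - snd q)) ((\<lambda>p. (fst p + snd p, fst p)) ` (UNIV \<times> UNIV))"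
    by (subst gsum_reindex) (auto simp: inj_on_def)
  also have "\<dots> = gsum cs (\<lambda>m. gsum cs (\<lambda>a. F a (m - a)) {..m}) UNIV"
    unfolding diag by (rule gsum_Sigma[symmetric]) simp_all
  finally show ?thesis by (simp add: gsum_eq_sum)
qed

end

section \<open>Series over finite words and their action on series over infinite words\<close>

definition splits :: "'a list \<Rightarrow> ('a list \<times> 'a list) set" where
  "splits w = {(u, v). u @ v = w}"

lemma splits_eq_image: "splits w = (\<lambda>k. (take k w, drop k w)) ` {0..length w}"
proof -
  have "u @ v = w \<Longrightarrow> \<exists>k\<in>{0..length w}. (u, v) = (take k w, drop k w)" for u v
    by (rule bexI[of _ "length u"]) auto
  thus ?thesis unfolding splits_def by (auto simp: image_iff)
qed

lemma finite_splits [simp]: "finite (splits w)"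
  unfolding splits_eq_image by simp

lemma s_mult_conv_splits: "s_mult r1 r2 w = (\<Sum>(u, v)\<in>splits w. r1 u * r2 v)"
proof -
  have "inj_on (\<lambda>k. (take k w, drop k w)) {0..length w}"
    by (rule inj_onI) (metis atLeastAtMost_iff length_take min.absorb2 prod.inject)
  thus ?thesis unfolding s_mult_def splits_eq_image by (simp add: sum.reindex)
qed

lemma s_mult_assoc: "s_mult (s_mult r1 r2) r3 w = s_mult r1 (s_mult r2 r3) w"
proof -
  have "s_mult (s_mult r1 r2) r3 w
      = (\<Sum>q\<in>splits w. \<Sum>p\<in>splits (fst q). r1 (fst p) * r2 (snd p) * r3 (snd q))"
    by (simp add: s_mult_conv_splits[of "s_mult r1 r2"] s_mult_conv_splits[of r1 r2]
        sum_distrib_right case_prod_beta)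
  also have "\<dots> = (\<Sum>p\<in>(SIGMA q:splits w. splits (fst q)). r1 (fst (snd p)) * r2 (snd (snd p)) * r3 (snd (fst p)))"
    by (subst sum.Sigma) (auto simp: case_prod_beta)
  also have "\<dots> = (\<Sum>p\<in>(SIGMA q:splits w. splits (snd q)). r1 (fst (fst p)) * (r2 (fst (snd p)) * r3 (snd (snd p))))"
    by (rule sum.reindex_bij_witness[where i = "\<lambda>((a, y), (b, v)). ((a @ b, v), (a, b))"
          and j = "\<lambda>((u, v), (a, b)). ((a, b @ v), (b, v))"])
       (auto simp: splits_def mult.assoc)
  also have "\<dots> = (\<Sum>q\<in>splits w. \<Sum>p\<in>splits (snd q). r1 (fst q) * (r2 (fst p) * r3 (snd p)))"
    by (subst sum.Sigma) (auto simp: case_prod_beta)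
  also have "\<dots> = s_mult r1 (s_mult r2 r3) w"
    by (simp add: s_mult_conv_splits[of r1] s_mult_conv_splits[of r2 r3] sum_distrib_left case_prod_beta)
  finally show ?thesis .
qed

lemma s_mult_sum_left: "s_mult (\<lambda>v. \<Sum>a\<in>A. f a v) r w = (\<Sum>a\<in>A. s_mult (f a) r w)"
  unfolding s_mult_def by (simp add: sum_distrib_right sum.swap[of _ A])

lemma s_mult_sum_right: "s_mult r (\<lambda>v. \<Sum>a\<in>A. f a v) w = (\<Sum>a\<in>A. s_mult r (f a) w)"
  unfolding s_mult_def by (simp add: sum_distrib_left sum.swap[of _ A])

lemma s_mult_zero_left: "(\<And>v. r v = 0) \<Longrightarrow> s_mult r r' w = 0"
  unfolding s_mult_def by simp

lemma s_mult_zero_right: "(\<And>v. r' v = 0) \<Longrightarrow> s_mult r r' w = 0"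
  unfolding s_mult_def by simp

lemma s_mult_one_left: "s_mult s_one r w = r w"
proof -
  have "s_mult s_one r w = (\<Sum>k\<in>{0..length w}. if k = 0 then r w else 0)"
    unfolding s_mult_def s_one_def by (rule sum.cong) auto
  thus ?thesis by simp
qed

lemma s_mult_one_right: "s_mult r s_one w = r w"
proof -
  have "s_mult r s_one w = (\<Sum>k\<in>{0..length w}. if k = length w then r w else 0)"
    unfolding s_mult_def s_one_def by (rule sum.cong) auto
  thus ?thesis by simp
qed

context complete_sum
begin

lemma s_mult_gsum_left:
  assumes "idx_embeddable TYPE('i)"
  shows "s_mult (\<lambda>v. gsum cs (\<lambda>a. f a v) (A::'i set)) r w = gsum cs (\<lambda>a. s_mult (f a) r w) A"
  unfolding s_mult_def by (simp add: gsum_distrib_right[OF assms, symmetric] gsum_sum_swap[OF assms])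

lemma s_mult_gsum_right:
  assumes "idx_embeddable TYPE('i)"
  shows "s_mult r (\<lambda>v. gsum cs (\<lambda>a. f a v) (A::'i set)) w = gsum cs (\<lambda>a. s_mult r (f a) w) A"
  unfolding s_mult_def by (simp add: gsum_distrib_left[OF assms, symmetric] gsum_sum_swap[OF assms])

lemma s_act_gsum_left:
  assumes "idx_embeddable TYPE('i)"
  shows "s_act cs (\<lambda>v. gsum cs (\<lambda>a. f a v) (A::'i set)) z w = gsum cs (\<lambda>a. s_act cs (f a) z w) A"
  unfolding s_act_def
  by (simp add: gsum_distrib_right[OF assms, symmetric] gsum_swap[OF assms idx_embeddable_countable])

lemma s_act_sum_left:
  assumes "finite A"
  shows "s_act cs (\<lambda>v. \<Sum>a\<in>A. f a v) z w = (\<Sum>a\<in>A. s_act cs (f a) z w)"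
  unfolding s_act_def by (simp add: sum_distrib_right gsum_sum_swap[OF idx_embeddable_countable assms])

lemma s_act_sum_right:
  assumes "finite A"
  shows "s_act cs r (\<lambda>w'. \<Sum>a\<in>A. f a w') w = (\<Sum>a\<in>A. s_act cs r (f a) w)"
  unfolding s_act_def by (simp add: sum_distrib_left gsum_sum_swap[OF idx_embeddable_countable assms])

lemma s_act_zero_left: "(\<And>v. r v = 0) \<Longrightarrow> s_act cs r z w = 0"
  unfolding s_act_def by (rule gsum_neutral) auto

lemma s_act_zero_right: "(\<And>w'. z w' = 0) \<Longrightarrow> s_act cs r z w = 0"
  unfolding s_act_def by (rule gsum_neutral) auto

lemma s_act_one: "s_act cs s_one z w = z w"
proof -
  have "s_act cs s_one z w = gsum cs (\<lambda>k. s_one (map w [0..<k]) * z (\<lambda>i. w (k + i))) {0}"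
    unfolding s_act_def by (rule gsum_mono_neutral) (auto simp: s_one_def)
  thus ?thesis by (simp add: gsum_singleton s_one_def)
qed

lemma s_act_assoc: "s_act cs r (s_act cs r' z) w = s_act cs (s_mult r r') z w"
proof -
  define F where "F = (\<lambda>k k'. r (map w [0..<k]) * r' (map w [k..<k + k']) * z (\<lambda>i. w (k + k' + i)))"
  have shift: "map (\<lambda>i. w (k + i)) [0..<k'] = map w [k..<k + k']" for k k'
    by (induct k') auto
  have "s_act cs r (s_act cs r' z) w = gsum cs (\<lambda>k. gsum cs (F k) UNIV) UNIV"
    unfolding s_act_def F_def by (simp add: gsum_distrib_left shift add.assoc mult.assoc)
  also have "\<dots> = gsum cs (\<lambda>m. \<Sum>k\<le>m. F k (m - k)) UNIV"
    by (rule gsum_Cauchy_product)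
  also have "\<dots> = s_act cs (s_mult r r') z w"
    unfolding s_act_def s_mult_def F_def
    by (rule gsum_cong) (auto simp: sum_distrib_right take_map drop_map atLeast0AtMost intro!: sum.cong)
  finally show ?thesis .
qed

end

section \<open>Block matrices\<close>

lemma m_mult_assoc: "m_mult n (m_mult n A B) C i j w = m_mult n A (m_mult n B C) i j w"
proof -
  have "m_mult n (m_mult n A B) C i j w
      = (\<Sum>k\<in>{1..n}. \<Sum>k'\<in>{1..n}. s_mult (A i k') (s_mult (B k' k) (C k j)) w)"
    unfolding m_mult_def by (simp add: s_mult_sum_left s_mult_assoc)
  also have "\<dots> = (\<Sum>k'\<in>{1..n}. \<Sum>k\<in>{1..n}. s_mult (A i k') (s_mult (B k' k) (C k j)) w)"
    by (rule sum.swap)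
  also have "\<dots> = m_mult n A (m_mult n B C) i j w"
    unfolding m_mult_def by (simp add: s_mult_sum_right)
  finally show ?thesis .
qed

lemma m_mult_cong:
  "(\<And>k. k \<in> {1..n} \<Longrightarrow> A i k = A' i k) \<Longrightarrow> (\<And>k. k \<in> {1..n} \<Longrightarrow> B k j = B' k j)
   \<Longrightarrow> m_mult n A B i j = m_mult n A' B' i j"
  unfolding m_mult_def by (rule ext, rule sum.cong) auto

lemma m_mult_one_left: "i \<in> {1..n} \<Longrightarrow> m_mult n m_one A i j w = A i j w"
  unfolding m_mult_def m_one_def s_zero_def
  by (simp add: s_mult_one_left s_mult_zero_left if_distrib[of "\<lambda>r. s_mult r _ w"] cong: if_cong)

lemma m_mult_one_right: "j \<in> {1..n} \<Longrightarrow> m_mult n A m_one i j w = A i j w"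
  unfolding m_mult_def m_one_def s_zero_def
  by (simp add: s_mult_one_right s_mult_zero_right if_distrib[of "\<lambda>r. s_mult _ r w"] cong: if_cong)

lemma m_mult_zero_left: "(\<And>k v. k \<in> {1..n} \<Longrightarrow> A i k v = 0) \<Longrightarrow> m_mult n A B i j w = 0"
  unfolding m_mult_def by (rule sum.neutral) (auto intro: s_mult_zero_left)

lemma m_mult_zero_right: "(\<And>k v. k \<in> {1..n} \<Longrightarrow> B k j v = 0) \<Longrightarrow> m_mult n A B i j w = 0"
  unfolding m_mult_def by (rule sum.neutral) (auto intro: s_mult_zero_right)

lemma m_mult_sum_right:
  "m_mult n B (\<lambda>i k v. \<Sum>a\<in>J. F a i k v) i j w = (\<Sum>a\<in>J. m_mult n B (F a) i j w)"
  unfolding m_mult_def by (simp add: s_mult_sum_right sum.swap[of _ J])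

context complete_sum
begin

lemma m_mult_gsum_left:
  assumes "idx_embeddable TYPE('i)"
  shows "m_mult n (\<lambda>i k v. gsum cs (\<lambda>a. F a i k v) (A::'i set)) B i j w
       = gsum cs (\<lambda>a. m_mult n (F a) B i j w) A"
  unfolding m_mult_def by (simp add: s_mult_gsum_left[OF assms] gsum_sum_swap[OF assms])

lemma m_mult_gsum_right:
  assumes "idx_embeddable TYPE('i)"
  shows "m_mult n B (\<lambda>i k v. gsum cs (\<lambda>a. F a i k v) (A::'i set)) i j w
       = gsum cs (\<lambda>a. m_mult n B (F a) i j w) A"
  unfolding m_mult_def by (simp add: s_mult_gsum_right[OF assms] gsum_sum_swap[OF assms])

lemma m_act_cong:
  "(\<And>k. k \<in> {1..n} \<Longrightarrow> A i k = A' i k) \<Longrightarrow> (\<And>k. k \<in> {1..n} \<Longrightarrow> z k = z' k)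
   \<Longrightarrow> m_act cs n A z i = m_act cs n A' z' i"
  unfolding m_act_def by (rule ext, rule sum.cong) auto

lemma m_act_assoc: "m_act cs n A (m_act cs n B z) i w = m_act cs n (m_mult n A B) z i w"
proof -
  have "m_act cs n A (m_act cs n B z) i w
      = (\<Sum>k\<in>{1..n}. \<Sum>k'\<in>{1..n}. s_act cs (s_mult (A i k) (B k k')) (z k') w)"
    unfolding m_act_def by (simp add: s_act_sum_right s_act_assoc)
  also have "\<dots> = (\<Sum>k'\<in>{1..n}. \<Sum>k\<in>{1..n}. s_act cs (s_mult (A i k) (B k k')) (z k') w)"
    by (rule sum.swap)
  also have "\<dots> = m_act cs n (m_mult n A B) z i w"
    unfolding m_act_def m_mult_def by (simp add: s_act_sum_left)
  finally show ?thesis .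
qed

lemma m_act_one: "i \<in> {1..n} \<Longrightarrow> m_act cs n m_one z i w = z i w"
  unfolding m_act_def m_one_def s_zero_def
  by (simp add: s_act_one s_act_zero_left if_distrib[of "\<lambda>r. s_act cs r _ w"] cong: if_cong)

lemma m_act_zero_left: "(\<And>k v. k \<in> {1..n} \<Longrightarrow> A i k v = 0) \<Longrightarrow> m_act cs n A z i w = 0"
  unfolding m_act_def by (rule sum.neutral) (auto intro: s_act_zero_left)

lemma m_act_gsum_left:
  assumes "idx_embeddable TYPE('i)"
  shows "m_act cs n (\<lambda>i k v. gsum cs (\<lambda>a. F a i k v) (A::'i set)) z i w
       = gsum cs (\<lambda>a. m_act cs n (F a) z i w) A"
  unfolding m_act_def by (simp add: s_act_gsum_left[OF assms] gsum_sum_swap[OF assms])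

lemma m_act_sum_right:
  assumes "finite J"
  shows "m_act cs n A (\<lambda>k w'. \<Sum>j\<in>J. f j k w') i w = (\<Sum>j\<in>J. m_act cs n A (f j) i w)"
  unfolding m_act_def by (simp add: s_act_sum_right[OF assms] sum.swap[of _ J])

end

section \<open>Powers and star of a pushdown transition matrix\<close>

declare M_pow.simps(2) [simp del]

context complete_sum
begin

lemma M_mult_M_one_left:
  fixes A :: "'g::countable list \<Rightarrow> 'g list \<Rightarrow> ('a, 's) blk"
  assumes "i \<in> {1..n}"
  shows "M_mult cs n M_one A \<pi>1 \<pi>2 i j w = A \<pi>1 \<pi>2 i j w"
proof -
  have "M_mult cs n M_one A \<pi>1 \<pi>2 i j w = gsum cs (\<lambda>\<pi>. m_mult n (M_one \<pi>1 \<pi>) (A \<pi> \<pi>2) i j w) {\<pi>1}"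
    unfolding M_mult_def
    by (rule gsum_mono_neutral) (auto simp: M_one_def m_zero_def s_zero_def intro!: m_mult_zero_left)
  thus ?thesis by (simp add: gsum_singleton M_one_def m_mult_one_left[OF assms])
qed

lemma M_mult_M_one_right:
  fixes A :: "'g::countable list \<Rightarrow> 'g list \<Rightarrow> ('a, 's) blk"
  assumes "j \<in> {1..n}"
  shows "M_mult cs n A M_one \<pi>1 \<pi>2 i j w = A \<pi>1 \<pi>2 i j w"
proof -
  have "M_mult cs n A M_one \<pi>1 \<pi>2 i j w = gsum cs (\<lambda>\<pi>. m_mult n (A \<pi>1 \<pi>) (M_one \<pi> \<pi>2) i j w) {\<pi>2}"
    unfolding M_mult_def
    by (rule gsum_mono_neutral) (auto simp: M_one_def m_zero_def s_zero_def intro!: m_mult_zero_right)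
  thus ?thesis by (simp add: gsum_singleton M_one_def m_mult_one_right[OF assms])
qed

lemma M_pow_Suc_left:
  fixes M :: "'g::countable list \<Rightarrow> 'g list \<Rightarrow> ('a, 's) blk"
  assumes "i \<in> {1..n}" "j \<in> {1..n}"
  shows "M_pow cs n M (Suc a) \<pi>1 \<pi>2 i j w
       = gsum cs (\<lambda>\<sigma>. m_mult n (M \<pi>1 \<sigma>) (M_pow cs n M a \<sigma> \<pi>2) i j w) UNIV"
  using assms
proof (induction a arbitrary: \<pi>2 j w)
  case 0
  thus ?case using M_mult_M_one_left[of i n M] M_mult_M_one_right[of j n M]
    by (simp add: M_pow.simps(2) M_mult_def)
next
  case (Suc a)
  have "M_pow cs n M (Suc (Suc a)) \<pi>1 \<pi>2 i j w
      = gsum cs (\<lambda>\<tau>. m_mult n (\<lambda>i k v. gsum cs (\<lambda>\<sigma>. m_mult n (M \<pi>1 \<sigma>) (M_pow cs n M a \<sigma> \<tau>) i k v) UNIV)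
                              (M \<tau> \<pi>2) i j w) UNIV"
    unfolding M_pow.simps(2)[of _ _ _ "Suc a"] M_mult_def
    by (intro gsum_cong fun_cong[OF m_mult_cong]) (auto intro!: ext Suc.IH Suc.prems(1))
  also have "\<dots> = gsum cs (\<lambda>\<tau>. gsum cs (\<lambda>\<sigma>.
      m_mult n (M \<pi>1 \<sigma>) (m_mult n (M_pow cs n M a \<sigma> \<tau>) (M \<tau> \<pi>2)) i j w) UNIV) UNIV"
    by (simp add: m_mult_gsum_left m_mult_assoc)
  also have "\<dots> = gsum cs (\<lambda>\<sigma>. gsum cs (\<lambda>\<tau>.
      m_mult n (M \<pi>1 \<sigma>) (m_mult n (M_pow cs n M a \<sigma> \<tau>) (M \<tau> \<pi>2)) i j w) UNIV) UNIV"
    by (rule gsum_swap) simp_all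
  also have "\<dots> = gsum cs (\<lambda>\<sigma>. m_mult n (M \<pi>1 \<sigma>) (M_pow cs n M (Suc a) \<sigma> \<pi>2) i j w) UNIV"
    by (simp add: m_mult_gsum_right M_pow.simps(2) M_mult_def)
  finally show ?case .
qed

lemma M_pow_Suc_mult:
  fixes M :: "'g::countable list \<Rightarrow> 'g list \<Rightarrow> ('a, 's) blk"
  assumes "i \<in> {1..n}"
  shows "m_mult n (M_pow cs n M (Suc a) \<alpha> \<pi>) B i j w
       = gsum cs (\<lambda>\<sigma>. m_mult n (m_mult n (M \<alpha> \<sigma>) (M_pow cs n M a \<sigma> \<pi>)) B i j w) UNIV"
proof -
  have "m_mult n (M_pow cs n M (Suc a) \<alpha> \<pi>) B i j w
      = m_mult n (\<lambda>i k v. gsum cs (\<lambda>\<sigma>. m_mult n (M \<alpha> \<sigma>) (M_pow cs n M a \<sigma> \<pi>) i k v) UNIV) B i j w"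
    by (rule fun_cong[OF m_mult_cong]) (auto intro!: ext M_pow_Suc_left assms)
  thus ?thesis by (simp add: m_mult_gsum_left)
qed

lemma M_pow_Suc_act:
  fixes M :: "'g::countable list \<Rightarrow> 'g list \<Rightarrow> ('a, 's) blk"
  assumes "i \<in> {1..n}"
  shows "m_act cs n (M_pow cs n M (Suc a) \<alpha> \<pi>) z i w
       = gsum cs (\<lambda>\<sigma>. m_act cs n (M \<alpha> \<sigma>) (m_act cs n (M_pow cs n M a \<sigma> \<pi>) z) i w) UNIV"
proof -
  have "m_act cs n (M_pow cs n M (Suc a) \<alpha> \<pi>) z i w
      = m_act cs n (\<lambda>i k v. gsum cs (\<lambda>\<sigma>. m_mult n (M \<alpha> \<sigma>) (M_pow cs n M a \<sigma> \<pi>) i k v) UNIV) z i w"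
    by (rule fun_cong[OF m_act_cong]) (auto intro!: ext M_pow_Suc_left assms)
  thus ?thesis by (simp add: m_act_gsum_left m_act_assoc)
qed

end

definition pd_step :: "'g list \<Rightarrow> 'g list \<Rightarrow> bool" where
  "pd_step \<pi>1 \<pi>2 \<longleftrightarrow> \<pi>1 \<noteq> [] \<and> (\<exists>\<delta>. \<pi>2 = \<delta> @ tl \<pi>1)"

lemma pd_step_append: "\<pi>1 \<noteq> [] \<Longrightarrow> pd_step (\<pi>1 @ \<beta>) (\<pi>2 @ \<beta>) \<longleftrightarrow> pd_step \<pi>1 \<pi>2"
  unfolding pd_step_def by (cases \<pi>1) auto

locale pushdown = complete_sum cs for cs :: "'s::semiring_1 csum_op" +
  fixes n :: nat and M :: "'g::countable list \<Rightarrow> 'g list \<Rightarrow> ('a::countable, 's) blk"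
  assumes pushdown: "pushdown_matrix n M"
begin

lemma M_eq_0_if_not_step:
  assumes "\<not> pd_step \<pi>1 \<pi>2" "i \<in> {1..n}" "j \<in> {1..n}"
  shows "M \<pi>1 \<pi>2 i j v = 0"
proof -
  have "\<not> (\<exists>p \<pi> \<pi>'. \<pi>1 = p # \<pi>' \<and> \<pi>2 = \<pi> @ \<pi>')"
    using assms(1) unfolding pd_step_def by auto
  hence "blk_eq n (M \<pi>1 \<pi>2) m_zero" using pushdown unfolding pushdown_matrix_def by blast
  thus ?thesis using assms(2,3) unfolding blk_eq_def m_zero_def s_zero_def by simp
qed

lemma M_append_suffix:
  assumes "\<pi>1 \<noteq> []" "i \<in> {1..n}" "j \<in> {1..n}"
  shows "M (\<pi>1 @ \<beta>) (\<pi>2 @ \<beta>) i j = M \<pi>1 \<pi>2 i j"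
proof (cases "pd_step \<pi>1 \<pi>2")
  case True
  then obtain q g \<delta> where q: "\<pi>1 = q # g" "\<pi>2 = \<delta> @ g" unfolding pd_step_def by (cases \<pi>1) auto
  have "blk_eq n (M (q # (g @ \<beta>)) (\<delta> @ (g @ \<beta>))) (M [q] \<delta>)" "blk_eq n (M (q # g) (\<delta> @ g)) (M [q] \<delta>)"
    using pushdown unfolding pushdown_matrix_def by blast+
  thus ?thesis using assms q unfolding blk_eq_def by simp
next
  case False
  hence "\<not> pd_step (\<pi>1 @ \<beta>) (\<pi>2 @ \<beta>)" using pd_step_append[OF assms(1)] by simp
  thus ?thesis using M_eq_0_if_not_step[OF False assms(2,3)] M_eq_0_if_not_step[OF _ assms(2,3)]
    by (auto intro!: ext)
qed

text \<open>A transition out of a stack \<open>\<gamma> @ \<beta>\<close> with nonempty \<open>\<gamma>\<close> leaves \<open>\<beta>\<close> untouched, so sums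
  over the successor stack may be taken over the successors of \<open>\<gamma>\<close> alone.\<close>

lemma gsum_successors_append:
  assumes "\<gamma> \<noteq> []" "i \<in> {1..n}"
    and G_0: "\<And>\<sigma> k. k \<in> {1..n} \<Longrightarrow> (\<And>v. M (\<gamma> @ \<beta>) \<sigma> i k v = 0) \<Longrightarrow> G \<sigma> k (M (\<gamma> @ \<beta>) \<sigma> i k) = 0"
  shows "gsum cs (\<lambda>\<sigma>. \<Sum>k\<in>{1..n}. G \<sigma> k (M (\<gamma> @ \<beta>) \<sigma> i k)) UNIV
       = gsum cs (\<lambda>\<sigma>. \<Sum>k\<in>{1..n}. G (\<sigma> @ \<beta>) k (M \<gamma> \<sigma> i k)) UNIV"
proof -
  have "gsum cs (\<lambda>\<sigma>. \<Sum>k\<in>{1..n}. G \<sigma> k (M (\<gamma> @ \<beta>) \<sigma> i k)) UNIV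
      = gsum cs (\<lambda>\<sigma>. \<Sum>k\<in>{1..n}. G \<sigma> k (M (\<gamma> @ \<beta>) \<sigma> i k)) (range (\<lambda>\<sigma>. \<sigma> @ \<beta>))"
  proof (rule gsum_mono_neutral)
    fix \<sigma> assume "\<sigma> \<notin> range (\<lambda>\<sigma>. \<sigma> @ \<beta>)"
    hence "\<not> pd_step (\<gamma> @ \<beta>) \<sigma>" using assms(1) unfolding pd_step_def by (cases \<gamma>) auto
    thus "(\<Sum>k\<in>{1..n}. G \<sigma> k (M (\<gamma> @ \<beta>) \<sigma> i k)) = 0"
      by (intro sum.neutral ballI G_0 M_eq_0_if_not_step assms(2)) auto
  qed simp_all
  also have "\<dots> = gsum cs (\<lambda>\<sigma>. \<Sum>k\<in>{1..n}. G (\<sigma> @ \<beta>) k (M (\<gamma> @ \<beta>) (\<sigma> @ \<beta>) i k)) UNIV"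
    by (rule gsum_reindex) (simp_all add: inj_on_def)
  also have "\<dots> = gsum cs (\<lambda>\<sigma>. \<Sum>k\<in>{1..n}. G (\<sigma> @ \<beta>) k (M \<gamma> \<sigma> i k)) UNIV"
    by (rule gsum_cong) (simp_all add: M_append_suffix[OF assms(1,2)])
  finally show ?thesis .
qed

lemma M_pow_Suc_from_Nil:
  "i \<in> {1..n} \<Longrightarrow> j \<in> {1..n} \<Longrightarrow> M_pow cs n M (Suc a) [] \<delta> i j w = 0"
  unfolding M_pow_Suc_left
  by (rule gsum_neutral) (auto intro!: m_mult_zero_left M_eq_0_if_not_step simp: pd_step_def)

lemma M_pow_Suc_append:
  assumes "\<alpha> \<noteq> []" "i \<in> {1..n}" "j \<in> {1..n}"
  shows "M_pow cs n M (Suc m) (\<alpha> @ \<beta>) \<pi> i j w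
       = gsum cs (\<lambda>\<sigma>. m_mult n (M \<alpha> \<sigma>) (M_pow cs n M m (\<sigma> @ \<beta>) \<pi>) i j w) UNIV"
  unfolding M_pow_Suc_left[OF assms(2,3)] m_mult_def
  by (rule gsum_successors_append[OF assms(1,2)]) (simp add: s_mult_zero_left)

lemma M_pow_append_Nil:
  "i \<in> {1..n} \<Longrightarrow> j \<in> {1..n} \<Longrightarrow> M_pow cs n M m (\<alpha> @ \<beta>) [] i j w =
     (\<Sum>a\<le>m. m_mult n (M_pow cs n M a \<alpha> []) (M_pow cs n M (m - a) \<beta> []) i j w)"
proof (induction m arbitrary: \<alpha> i j w)
  case 0
  thus ?case
    by (cases "\<alpha> = [] \<and> \<beta> = []")
       (auto simp: M_one_def m_zero_def s_zero_def m_mult_one_left intro: m_mult_zero_left m_mult_zero_right)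
next
  case (Suc m)
  note ij = Suc.prems
  show ?case
  proof (cases "\<alpha> = []")
    case True
    have "m_mult n (M_pow cs n M (Suc a) [] []) B i j w = 0" for a B
      by (rule m_mult_zero_left) (use M_pow_Suc_from_Nil ij(1) in blast)
    thus ?thesis using True
      by (subst sum.atMost_Suc_shift) (simp add: M_one_def m_mult_one_left[OF ij(1)])
  next
    case False
    have "M_pow cs n M (Suc m) (\<alpha> @ \<beta>) [] i j w
       = gsum cs (\<lambda>\<sigma>. m_mult n (M \<alpha> \<sigma>) (\<lambda>k j w. \<Sum>a\<le>m. m_mult n (M_pow cs n M a \<sigma> []) (M_pow cs n M (m - a) \<beta> []) k j w) i j w) UNIV"
      unfolding M_pow_Suc_append[OF False ij]
      by (intro gsum_cong fun_cong[OF m_mult_cong]) (auto intro!: ext Suc.IH ij(2))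
    also have "\<dots> = (\<Sum>a\<le>m. gsum cs (\<lambda>\<sigma>. m_mult n (m_mult n (M \<alpha> \<sigma>) (M_pow cs n M a \<sigma> [])) (M_pow cs n M (m - a) \<beta> []) i j w) UNIV)"
      by (simp add: m_mult_sum_right m_mult_assoc gsum_sum_swap)
    also have "\<dots> = (\<Sum>a\<le>m. m_mult n (M_pow cs n M (Suc a) \<alpha> []) (M_pow cs n M (m - a) \<beta> []) i j w)"
      by (simp add: M_pow_Suc_mult[OF ij(1)])
    also have "\<dots> = (\<Sum>a\<le>Suc m. m_mult n (M_pow cs n M a \<alpha> []) (M_pow cs n M (Suc m - a) \<beta> []) i j w)"
      by (subst sum.atMost_Suc_shift) (simp add: M_one_def False m_zero_def s_zero_def m_mult_zero_left)
    finally show ?thesis .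
  qed
qed

lemma M_star_append_Nil:
  assumes ij: "i \<in> {1..n}" "j \<in> {1..n}"
  shows "M_star cs n M (\<alpha> @ \<beta>) [] i j w = m_mult n (M_star cs n M \<alpha> []) (M_star cs n M \<beta> []) i j w"
proof -
  define F where "F = (\<lambda>a b. m_mult n (M_pow cs n M a \<alpha> []) (M_pow cs n M b \<beta> []) i j w)"
  have "M_star cs n M (\<alpha> @ \<beta>) [] i j w = gsum cs (\<lambda>m. \<Sum>a\<le>m. F a (m - a)) UNIV"
    unfolding M_star_def F_def by (rule gsum_cong) (simp_all add: M_pow_append_Nil[OF ij])
  also have "\<dots> = gsum cs (\<lambda>a. gsum cs (F a) UNIV) UNIV"
    by (rule gsum_Cauchy_product[symmetric])
  also have "\<dots> = m_mult n (M_star cs n M \<alpha> []) (M_star cs n M \<beta> []) i j w"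
    unfolding M_star_def F_def by (simp add: m_mult_gsum_left m_mult_gsum_right)
  finally show ?thesis .
qed

lemma M_star_Nil_Nil:
  assumes ij: "i \<in> {1..n}" "j \<in> {1..n}"
  shows "M_star cs n M [] [] i j w = m_one i j w"
proof -
  have "M_star cs n M [] [] i j w = gsum cs (\<lambda>m. M_pow cs n M m [] [] i j w) {0}"
    unfolding M_star_def
    by (rule gsum_mono_neutral) (auto simp: gr0_conv_Suc M_pow_Suc_from_Nil[OF ij])
  thus ?thesis by (simp add: gsum_singleton M_one_def)
qed

lemma M_star_Nil_eq_m_prod:
  "i \<in> {1..n} \<Longrightarrow> j \<in> {1..n} \<Longrightarrow>
     M_star cs n M \<pi> [] i j w = m_prod n (map (\<lambda>p. M_star cs n M [p] []) \<pi>) i j w"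
proof (induction \<pi> arbitrary: i j w)
  case Nil
  thus ?case by (simp add: M_star_Nil_Nil m_prod_def)
next
  case (Cons q \<pi>)
  have "M_star cs n M ([q] @ \<pi>) [] i j w = m_mult n (M_star cs n M [q] []) (M_star cs n M \<pi> []) i j w"
    by (rule M_star_append_Nil[OF Cons.prems])
  also have "\<dots> = m_mult n (M_star cs n M [q] []) (m_prod n (map (\<lambda>p. M_star cs n M [p] []) \<pi>)) i j w"
    by (rule fun_cong[OF m_mult_cong]) (auto intro!: ext Cons.IH Cons.prems)
  finally show ?case by (simp add: m_prod_def)
qed

lemma M_star_single_Nil:
  assumes ij: "i \<in> {1..n}" "j \<in> {1..n}"
  shows "M_star cs n M [p] [] i j w =
    gsum cs (\<lambda>\<pi>. m_mult n (M [p] \<pi>) (m_prod n (map (\<lambda>p. M_star cs n M [p] []) \<pi>)) i j w) UNIV"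
proof -
  have "M_star cs n M [p] [] i j w = gsum cs (\<lambda>m. M_pow cs n M m [p] [] i j w) (range Suc)"
    unfolding M_star_def
  proof (rule gsum_mono_neutral)
    fix m assume "m \<notin> range Suc"
    hence "m = 0" by (cases m) auto
    thus "M_pow cs n M m [p] [] i j w = 0" by (simp add: M_one_def m_zero_def s_zero_def)
  qed simp_all
  also have "\<dots> = gsum cs (\<lambda>a. gsum cs (\<lambda>\<sigma>. m_mult n (M [p] \<sigma>) (M_pow cs n M a \<sigma> []) i j w) UNIV) UNIV"
    by (subst gsum_reindex) (simp_all add: M_pow_Suc_left[OF ij])
  also have "\<dots> = gsum cs (\<lambda>\<sigma>. m_mult n (M [p] \<sigma>) (M_star cs n M \<sigma> []) i j w) UNIV"
    unfolding M_star_def by (subst gsum_swap) (simp_all add: m_mult_gsum_right)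
  also have "\<dots> = gsum cs (\<lambda>\<pi>. m_mult n (M [p] \<pi>) (m_prod n (map (\<lambda>p. M_star cs n M [p] []) \<pi>)) i j w) UNIV"
    by (rule gsum_cong) (auto intro!: fun_cong[OF m_mult_cong] ext M_star_Nil_eq_m_prod ij)
  finally show ?thesis .
qed

end

section \<open>Infinite computations\<close>

lemma build_conv_if: "(a ## f) t = (if t = 0 then a else f (t - 1))"
  by (cases t) simp_all

lemma build_head_tail: "f 0 ## (\<lambda>t. f (Suc t)) = f"
proof
  show "(f 0 ## (\<lambda>t. f (Suc t))) t = f t" for t by (cases t) simp_all
qed

lemma all_nat_unfold: "(\<forall>t::nat. P t) \<longleftrightarrow> P 0 \<and> (\<forall>t. P (Suc t))"
proof (intro iffI allI)
  fix t assume "P 0 \<and> (\<forall>t. P (Suc t))"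
  thus "P t" by (cases t) auto
qed auto

lemma factorization_build:
  "factorization (v ## u) w \<longleftrightarrow> v = map w [0..<length v] \<and> factorization u (\<lambda>i. w (length v + i))"
proof -
  define c where "c = (\<lambda>j. \<Sum>i<j. length ((v ## u) i))"
  define c' where "c' = (\<lambda>j. \<Sum>i<j. length (u i))"
  have c_Suc: "c (Suc j) = length v + c' j" for j unfolding c_def c'_def by (simp only: sum.lessThan_Suc_shift) simp
  have c0: "c 0 = 0" unfolding c_def by simp
  have shift: "map (\<lambda>i. w (K + i)) [a..<b] = map w [K + a..<K + b]" for K a b by (induct b) auto
  have "(\<forall>j. (v ## u) j = map w [c j..<c (Suc j)]) \<longleftrightarrow>
      (v ## u) 0 = map w [c 0..<c (Suc 0)] \<and> (\<forall>j. (v ## u) (Suc j) = map w [c (Suc j)..<c (Suc (Suc j))])"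
    by (rule all_nat_unfold)
  also have "\<dots> \<longleftrightarrow> v = map w [0..<length v] \<and> (\<forall>j. u j = map (\<lambda>i. w (length v + i)) [c' j..<c' (Suc j)])"
    by (simp add: c_Suc shift c0 c'_def)
  moreover have "(\<forall>k. \<exists>j. k \<le> c j) \<longleftrightarrow> (\<forall>k. \<exists>j. k \<le> c' j)"
  proof
    assume h: "\<forall>k. \<exists>j. k \<le> c j"
    show "\<forall>k. \<exists>j. k \<le> c' j"
    proof
      fix k
      obtain j where j: "length v + k \<le> c j" using h by blast
      thus "\<exists>j. k \<le> c' j" by (cases j) (auto simp: c0 c_Suc intro: exI[of _ 0])
    qed
  next
    assume h: "\<forall>k. \<exists>j. k \<le> c' j"
    show "\<forall>k. \<exists>j. k \<le> c j"
    proof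
      fix k
      obtain j where "k \<le> c' j" using h by blast
      hence "k \<le> c (Suc j)" using c_Suc by simp
      thus "\<exists>j. k \<le> c j" ..
    qed
  qed
  ultimately show ?thesis
    unfolding factorization_def Let_def c_def[symmetric] c'_def[symmetric] by simp
qed

lemma P_l_build: "k ## js \<in> P_l n l \<longleftrightarrow> k \<in> {1..n} \<and> js \<in> P_l n l"
proof -
  have "{t. (k ## js) t \<le> l} \<subseteq> insert 0 (Suc ` {t. js t \<le> l})"
  proof
    fix t assume "t \<in> {t. (k ## js) t \<le> l}"
    thus "t \<in> insert 0 (Suc ` {t. js t \<le> l})" by (cases t) auto
  qed
  moreover have "Suc ` {t. js t \<le> l} \<subseteq> {t. (k ## js) t \<le> l}" by auto
  ultimately have "finite {t. (k ## js) t \<le> l} \<longleftrightarrow> finite {t. js t \<le> l}"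
    using finite_subset finite_imageD[of Suc] by (metis finite_imageI finite_insert inj_Suc)
  moreover have "(\<forall>t. (k ## js) t \<in> {1..n}) \<longleftrightarrow> k \<in> {1..n} \<and> (\<forall>t. js t \<in> {1..n})"
    by (subst all_nat_unfold) simp
  ultimately show ?thesis unfolding P_l_def by auto
qed

lemma P_l_range: "js \<in> P_l n l \<Longrightarrow> js t \<in> {1..n}"
  unfolding P_l_def by auto

context complete_sum
begin

lemma gsum_build:
  "gsum cs F (Q :: (nat \<Rightarrow> 'b::countable) set) = gsum cs (\<lambda>\<rho>. gsum cs (\<lambda>f. F (\<rho> ## f)) {f. \<rho> ## f \<in> Q}) UNIV"
proof -
  have "gsum cs (\<lambda>\<rho>. gsum cs (\<lambda>f. F (\<rho> ## f)) {f. \<rho> ## f \<in> Q}) UNIV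
      = gsum cs (\<lambda>p. F (fst p ## snd p)) (SIGMA \<rho>:UNIV. {f. \<rho> ## f \<in> Q})"
    by (rule gsum_Sigma) simp_all
  also have "\<dots> = gsum cs F ((\<lambda>p. fst p ## snd p) ` (SIGMA \<rho>:UNIV. {f. \<rho> ## f \<in> Q}))"
    by (rule gsum_reindex[symmetric]) (auto simp: inj_on_def)
  also have "(\<lambda>p. fst p ## snd p) ` (SIGMA \<rho>:UNIV. {f. \<rho> ## f \<in> Q}) = Q"
  proof -
    have "f \<in> (\<lambda>p. fst p ## snd p) ` (SIGMA \<rho>:UNIV. {f. \<rho> ## f \<in> Q})" if "f \<in> Q" for f
      by (rule image_eqI[of _ _ "(f 0, \<lambda>t. f (Suc t))"]) (simp_all add: build_head_tail that)
    thus ?thesis by auto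
  qed
  finally show ?thesis ..
qed

lemma gsum_P_l:
  "gsum cs G (P_l n l) = gsum cs (\<lambda>k. gsum cs (\<lambda>js. G (k ## js)) (P_l n l)) {1..n}"
proof -
  have "gsum cs G (P_l n l) = gsum cs (\<lambda>k. gsum cs (\<lambda>js. G (k ## js)) {js. k ## js \<in> P_l n l}) UNIV"
    by (rule gsum_build)
  also have "\<dots> = gsum cs (\<lambda>k. gsum cs (\<lambda>js. G (k ## js)) {js. k ## js \<in> P_l n l}) {1..n}"
    by (rule gsum_mono_neutral) (auto simp: P_l_build gsum_empty)
  also have "\<dots> = gsum cs (\<lambda>k. gsum cs (\<lambda>js. G (k ## js)) (P_l n l)) {1..n}"
    by (rule gsum_cong) (simp_all add: P_l_build)
  finally show ?thesis .
qed

lemma gsum_factorization: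
  "gsum cs H {u. factorization u w} =
   gsum cs (\<lambda>K. gsum cs (\<lambda>u. H (map w [0..<K] ## u)) {u. factorization u (\<lambda>i. w (K + i))}) UNIV"
  for H :: "(nat \<Rightarrow> 'a::countable list) \<Rightarrow> 's"
proof -
  have "gsum cs H {u. factorization u w}
      = gsum cs (\<lambda>v. gsum cs (\<lambda>u. H (v ## u)) {u. factorization (v ## u) w}) UNIV"
    by (rule gsum_build[of H "{u. factorization u w}", simplified])
  also have "\<dots> = gsum cs (\<lambda>v. gsum cs (\<lambda>u. H (v ## u)) {u. factorization (v ## u) w}) (range (\<lambda>K. map w [0..<K]))"
  proof (rule gsum_mono_neutral)
    fix v assume "v \<notin> range (\<lambda>K. map w [0..<K])"
    hence "{u. factorization (v ## u) w} = {}" by (auto simp: factorization_build)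
    thus "gsum cs (\<lambda>u. H (v ## u)) {u. factorization (v ## u) w} = 0" by (simp add: gsum_empty)
  qed simp_all
  also have "\<dots> = gsum cs (\<lambda>K. gsum cs (\<lambda>u. H (map w [0..<K] ## u)) {u. factorization (map w [0..<K] ## u) w}) UNIV"
    by (rule gsum_reindex) (auto simp: inj_on_def dest: arg_cong[where f = length])
  finally show ?thesis by (simp add: factorization_build)
qed

end

definition pd_runs :: "'g list \<Rightarrow> (nat \<Rightarrow> 'g list) set" where
  "pd_runs \<gamma> = {\<pi>s. \<forall>t. pd_step ((\<gamma> ## \<pi>s) t) (\<pi>s t)}"

lemma pd_runs_Nil: "pd_runs [] = {}"
  unfolding pd_runs_def pd_step_def by (auto intro: exI[of _ 0])

definition avoiding :: "'g list \<Rightarrow> 'g list \<Rightarrow> (nat \<Rightarrow> 'g list) set" where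
  "avoiding \<gamma> \<beta> = {\<pi>s. \<forall>t. (\<gamma> ## \<pi>s) t \<noteq> \<beta>}"

definition first_hitting :: "'g list \<Rightarrow> 'g list \<Rightarrow> nat \<Rightarrow> (nat \<Rightarrow> 'g list) set" where
  "first_hitting \<gamma> \<beta> a = {\<pi>s. (\<gamma> ## \<pi>s) a = \<beta> \<and> (\<forall>t<a. (\<gamma> ## \<pi>s) t \<noteq> \<beta>)}"

lemma avoiding_Un_first_hitting: "avoiding \<gamma> \<beta> \<union> (\<Union>a. first_hitting \<gamma> \<beta> a) = UNIV"
proof -
  have "\<pi>s \<in> (\<Union>a. first_hitting \<gamma> \<beta> a)" if "\<pi>s \<notin> avoiding \<gamma> \<beta>" for \<pi>s
  proof -
    from that have "\<exists>t. (\<gamma> ## \<pi>s) t = \<beta>" unfolding avoiding_def by auto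
    hence "\<exists>a. (\<gamma> ## \<pi>s) a = \<beta> \<and> (\<forall>t<a. (\<gamma> ## \<pi>s) t \<noteq> \<beta>)"
      using exists_least_iff[of "\<lambda>t. (\<gamma> ## \<pi>s) t = \<beta>"] by blast
    thus ?thesis unfolding first_hitting_def by blast
  qed
  thus ?thesis by blast
qed

lemma first_hitting_disjoint: "a \<noteq> b \<Longrightarrow> first_hitting \<gamma> \<beta> a \<inter> first_hitting \<gamma> \<beta> b = {}"
  unfolding first_hitting_def by (auto dest: nat_neq_iff[THEN iffD1])

lemma build_append_suffix: "((\<gamma> @ \<beta>) ## (\<lambda>t. \<pi>s t @ \<beta>)) t = (\<gamma> ## \<pi>s) t @ \<beta>"
  by (cases t) simp_all

lemma pd_runs_avoiding_suffix:
  assumes "\<gamma> \<noteq> []" "\<pi>s \<in> pd_runs (\<gamma> @ \<beta>)" "\<pi>s \<in> avoiding (\<gamma> @ \<beta>) \<beta>"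
  shows "\<exists>\<delta>. \<delta> \<noteq> [] \<and> ((\<gamma> @ \<beta>) ## \<pi>s) t = \<delta> @ \<beta>"
proof (induction t)
  case 0
  thus ?case using assms(1) by auto
next
  case (Suc t)
  then obtain \<delta> where \<delta>: "\<delta> \<noteq> []" "((\<gamma> @ \<beta>) ## \<pi>s) t = \<delta> @ \<beta>" by blast
  have "pd_step (((\<gamma> @ \<beta>) ## \<pi>s) t) (\<pi>s t)" using assms(2) unfolding pd_runs_def by blast
  hence "pd_step (\<delta> @ \<beta>) (\<pi>s t)" by (simp only: \<delta>(2))
  then obtain e where "\<pi>s t = e @ tl \<delta> @ \<beta>" using \<delta>(1) unfolding pd_step_def by (cases \<delta>) auto
  moreover have "((\<gamma> @ \<beta>) ## \<pi>s) (Suc t) \<noteq> \<beta>" using assms(3) unfolding avoiding_def by blast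
  ultimately show ?case by auto
qed

lemma append_suffix_pd_runs:
  assumes "\<gamma> \<noteq> []"
  shows "(\<lambda>\<pi>s t. \<pi>s t @ \<beta>) ` pd_runs \<gamma> = avoiding (\<gamma> @ \<beta>) \<beta> \<inter> pd_runs (\<gamma> @ \<beta>)"
proof
  show "(\<lambda>\<pi>s t. \<pi>s t @ \<beta>) ` pd_runs \<gamma> \<subseteq> avoiding (\<gamma> @ \<beta>) \<beta> \<inter> pd_runs (\<gamma> @ \<beta>)"
  proof clarify
    fix \<pi>s assume runs: "\<pi>s \<in> pd_runs \<gamma>"
    hence "(\<gamma> ## \<pi>s) t \<noteq> []" for t unfolding pd_runs_def pd_step_def by blast
    thus "(\<lambda>t. \<pi>s t @ \<beta>) \<in> avoiding (\<gamma> @ \<beta>) \<beta> \<inter> pd_runs (\<gamma> @ \<beta>)"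
      using runs unfolding avoiding_def pd_runs_def by (simp add: build_append_suffix pd_step_append)
  qed
next
  show "avoiding (\<gamma> @ \<beta>) \<beta> \<inter> pd_runs (\<gamma> @ \<beta>) \<subseteq> (\<lambda>\<pi>s t. \<pi>s t @ \<beta>) ` pd_runs \<gamma>"
  proof clarify
    fix \<pi>s' assume avoid: "\<pi>s' \<in> avoiding (\<gamma> @ \<beta>) \<beta>" and runs: "\<pi>s' \<in> pd_runs (\<gamma> @ \<beta>)"
    note above = pd_runs_avoiding_suffix[OF assms runs avoid]
    define \<pi>s where "\<pi>s = (\<lambda>t. take (length (\<pi>s' t) - length \<beta>) (\<pi>s' t))"
    have \<pi>s': "\<pi>s' = (\<lambda>t. \<pi>s t @ \<beta>)"
    proof
      fix t
      obtain \<delta> where "\<pi>s' t = \<delta> @ \<beta>" using above[of "Suc t"] by auto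
      thus "\<pi>s' t = \<pi>s t @ \<beta>" unfolding \<pi>s_def by simp
    qed
    have "(\<gamma> ## \<pi>s) t \<noteq> []" for t
      using above[of t] unfolding \<pi>s' build_append_suffix by auto
    hence "\<pi>s \<in> pd_runs \<gamma>"
      using runs unfolding pd_runs_def \<pi>s' by (simp add: build_append_suffix pd_step_append)
    thus "\<pi>s' \<in> (\<lambda>\<pi>s t. \<pi>s t @ \<beta>) ` pd_runs \<gamma>" unfolding \<pi>s' by blast
  qed
qed

locale omega_pushdown = pushdown cs n M
  for cs :: "'s::semiring_1 csum_op" and n :: nat
    and M :: "'g::countable list \<Rightarrow> 'g list \<Rightarrow> ('a::countable, 's) blk" +
  fixes ip :: "(nat \<Rightarrow> 's) \<Rightarrow> 's" and l :: nat
  assumes ip_unfold: "ip s = s 0 * ip (\<lambda>j. s (Suc j))"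
begin

lemma ip_eq_0: "s t = 0 \<Longrightarrow> ip s = 0"
proof (induction t arbitrary: s)
  case 0
  thus ?case by (subst ip_unfold) simp
next
  case (Suc t)
  thus ?case by (subst ip_unfold) simp
qed

definition run_weight :: "'g list \<Rightarrow> nat \<Rightarrow> (nat \<Rightarrow> 'g list) \<Rightarrow> (nat \<Rightarrow> nat) \<Rightarrow> (nat \<Rightarrow> 'a list) \<Rightarrow> 's" where
  "run_weight \<gamma> i \<pi>s js u = ip (\<lambda>t. M ((\<gamma> ## \<pi>s) t) (\<pi>s t) ((i ## js) t) (js t) (u t))"

text \<open>The entry \<open>((M\<^sup>\<omega>\<^sup>,\<^sup>l)\<^sub>\<gamma>)\<^sub>i\<close> with the stack contents \<open>\<pi>\<^sub>1, \<pi>\<^sub>2, \<dots>\<close> restricted to \<open>Q\<close>.\<close>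

definition M_omega_on :: "'g list \<Rightarrow> nat \<Rightarrow> (nat \<Rightarrow> 'g list) set \<Rightarrow> (nat \<Rightarrow> 'a) \<Rightarrow> 's" where
  "M_omega_on \<gamma> i Q w =
     gsum cs (\<lambda>\<pi>s. gsum cs (\<lambda>js. gsum cs (\<lambda>u. run_weight \<gamma> i \<pi>s js u) {u. factorization u w}) (P_l n l)) Q"

lemma M_omega_eq_M_omega_on: "M_omega cs ip n l M \<gamma> i w = M_omega_on \<gamma> i UNIV w"
  unfolding M_omega_def M_omega_on_def run_weight_def s_iprod_def build_conv_if ..

lemma run_weight_build:
  "run_weight \<gamma> i (\<rho> ## \<pi>s) (k ## js) (v ## u) = M \<gamma> \<rho> i k v * run_weight \<rho> k \<pi>s js u"
  unfolding run_weight_def by (subst ip_unfold) simp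

lemma run_weights_first_step:
  "gsum cs (\<lambda>js. gsum cs (\<lambda>u. run_weight \<gamma> i (\<rho> ## \<pi>s) js u) {u. factorization u w}) (P_l n l)
   = (\<Sum>k\<in>{1..n}. gsum cs (\<lambda>K. M \<gamma> \<rho> i k (map w [0..<K]) *
        gsum cs (\<lambda>js. gsum cs (\<lambda>u. run_weight \<rho> k \<pi>s js u) {u. factorization u (\<lambda>t. w (K + t))}) (P_l n l)) UNIV)"
proof -
  have "gsum cs (\<lambda>js. gsum cs (\<lambda>u. run_weight \<gamma> i (\<rho> ## \<pi>s) js u) {u. factorization u w}) (P_l n l)
      = gsum cs (\<lambda>k. gsum cs (\<lambda>js. gsum cs (\<lambda>K. gsum cs (\<lambda>u. M \<gamma> \<rho> i k (map w [0..<K]) * run_weight \<rho> k \<pi>s js u)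
          {u. factorization u (\<lambda>t. w (K + t))}) UNIV) (P_l n l)) {1..n}"
    by (subst gsum_P_l) (intro gsum_cong; simp add: gsum_factorization[where w = w] run_weight_build)
  also have "\<dots> = gsum cs (\<lambda>k. gsum cs (\<lambda>K. gsum cs (\<lambda>js. gsum cs (\<lambda>u. M \<gamma> \<rho> i k (map w [0..<K]) * run_weight \<rho> k \<pi>s js u)
          {u. factorization u (\<lambda>t. w (K + t))}) (P_l n l)) UNIV) {1..n}"
    by (intro gsum_cong gsum_swap) simp_all
  finally show ?thesis by (simp add: gsum_eq_sum gsum_distrib_left)
qed

lemma M_omega_on_first_step:
  "M_omega_on \<gamma> i Q w
   = gsum cs (\<lambda>\<rho>. \<Sum>k\<in>{1..n}. s_act cs (M \<gamma> \<rho> i k) (M_omega_on \<rho> k {\<pi>s. \<rho> ## \<pi>s \<in> Q}) w) UNIV"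
proof -
  define X where "X = (\<lambda>\<rho> k K \<pi>s. gsum cs (\<lambda>js. gsum cs (\<lambda>u. run_weight \<rho> k \<pi>s js u)
                        {u. factorization u (\<lambda>t. w (K + t))}) (P_l n l))"
  have "M_omega_on \<gamma> i Q w = gsum cs (\<lambda>\<rho>. gsum cs (\<lambda>\<pi>s. \<Sum>k\<in>{1..n}.
          gsum cs (\<lambda>K. M \<gamma> \<rho> i k (map w [0..<K]) * X \<rho> k K \<pi>s) UNIV) {\<pi>s. \<rho> ## \<pi>s \<in> Q}) UNIV"
    unfolding M_omega_on_def X_def by (subst gsum_build) (simp add: run_weights_first_step)
  also have "\<dots> = gsum cs (\<lambda>\<rho>. \<Sum>k\<in>{1..n}. gsum cs (\<lambda>K. M \<gamma> \<rho> i k (map w [0..<K]) *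
          gsum cs (X \<rho> k K) {\<pi>s. \<rho> ## \<pi>s \<in> Q}) UNIV) UNIV"
    by (intro gsum_cong) (simp_all add: gsum_sum_swap gsum_swap[where B = UNIV] gsum_distrib_left)
  finally show ?thesis unfolding s_act_def M_omega_on_def X_def by simp
qed

lemma M_omega_on_empty: "M_omega_on \<gamma> i {} w = 0"
  unfolding M_omega_on_def by (simp add: gsum_empty)

lemma M_omega_on_Un_disjoint:
  "A \<inter> B = {} \<Longrightarrow> M_omega_on \<gamma> i (A \<union> B) w = M_omega_on \<gamma> i A w + M_omega_on \<gamma> i B w"
  unfolding M_omega_on_def by (rule gsum_Un_disjoint) simp_all

lemma M_omega_on_UN_disjoint:
  "(\<And>a b. a \<noteq> b \<Longrightarrow> Q a \<inter> Q b = {}) \<Longrightarrow> M_omega_on \<gamma> i (\<Union>a. Q a) w = gsum cs (\<lambda>a::nat. M_omega_on \<gamma> i (Q a) w) UNIV"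
  unfolding M_omega_on_def by (rule gsum_UN_disjoint) simp_all

lemma M_omega_on_pd_runs:
  assumes i: "i \<in> {1..n}"
  shows "M_omega_on \<gamma> i Q w = M_omega_on \<gamma> i (Q \<inter> pd_runs \<gamma>) w"
  unfolding M_omega_on_def
proof (rule gsum_mono_neutral)
  fix \<pi>s assume "\<pi>s \<notin> Q \<inter> pd_runs \<gamma>" "\<pi>s \<in> Q"
  then obtain t where t: "\<not> pd_step ((\<gamma> ## \<pi>s) t) (\<pi>s t)" unfolding pd_runs_def by auto
  show "gsum cs (\<lambda>js. gsum cs (\<lambda>u. run_weight \<gamma> i \<pi>s js u) {u. factorization u w}) (P_l n l) = 0"
  proof (rule gsum_neutral)
    fix js assume js: "js \<in> P_l n l"
    have "(i ## js) t \<in> {1..n}" using i P_l_range[OF js] by (cases t) auto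
    thus "gsum cs (\<lambda>u. run_weight \<gamma> i \<pi>s js u) {u. factorization u w} = 0"
      unfolding run_weight_def
      by (intro gsum_neutral ip_eq_0[of _ t] M_eq_0_if_not_step[OF t] P_l_range[OF js]) simp_all
  qed simp
qed simp_all

lemma M_omega_on_avoiding_suffix:
  assumes ne: "\<gamma> \<noteq> []" and i: "i \<in> {1..n}"
  shows "M_omega_on (\<gamma> @ \<beta>) i (avoiding (\<gamma> @ \<beta>) \<beta>) w = M_omega_on \<gamma> i UNIV w"
proof -
  have "M_omega_on (\<gamma> @ \<beta>) i (avoiding (\<gamma> @ \<beta>) \<beta>) w
      = M_omega_on (\<gamma> @ \<beta>) i ((\<lambda>\<pi>s t. \<pi>s t @ \<beta>) ` pd_runs \<gamma>) w"
    by (subst M_omega_on_pd_runs[OF i]) (simp add: append_suffix_pd_runs[OF ne])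
  also have "\<dots> = gsum cs (\<lambda>\<pi>s. gsum cs (\<lambda>js. gsum cs (\<lambda>u. run_weight (\<gamma> @ \<beta>) i (\<lambda>t. \<pi>s t @ \<beta>) js u)
                      {u. factorization u w}) (P_l n l)) (pd_runs \<gamma>)"
    unfolding M_omega_on_def by (rule gsum_reindex) (auto simp: inj_on_def fun_eq_iff)
  also have "\<dots> = M_omega_on \<gamma> i (pd_runs \<gamma>) w"
    unfolding M_omega_on_def
  proof (intro gsum_cong)
    fix \<pi>s js u assume runs: "\<pi>s \<in> pd_runs \<gamma>" and js: "js \<in> P_l n l"
    have "(\<gamma> ## \<pi>s) t \<noteq> []" for t using runs unfolding pd_runs_def pd_step_def by blast
    moreover have "(i ## js) t \<in> {1..n}" for t using i P_l_range[OF js] by (cases t) auto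
    ultimately have "M ((\<gamma> ## \<pi>s) t @ \<beta>) (\<pi>s t @ \<beta>) ((i ## js) t) (js t) = M ((\<gamma> ## \<pi>s) t) (\<pi>s t) ((i ## js) t) (js t)"
      for t by (intro M_append_suffix P_l_range[OF js])
    thus "run_weight (\<gamma> @ \<beta>) i (\<lambda>t. \<pi>s t @ \<beta>) js u = run_weight \<gamma> i \<pi>s js u"
      unfolding run_weight_def by (simp add: build_append_suffix)
  qed simp_all
  also have "\<dots> = M_omega_on \<gamma> i UNIV w" by (simp add: M_omega_on_pd_runs[OF i, of _ UNIV])
  finally show ?thesis .
qed

lemma M_omega_on_split_first_hitting:
  "M_omega_on \<gamma> i UNIV w
   = M_omega_on \<gamma> i (avoiding \<gamma> \<beta>) w + gsum cs (\<lambda>a. M_omega_on \<gamma> i (first_hitting \<gamma> \<beta> a) w) UNIV"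
proof -
  have "avoiding \<gamma> \<beta> \<inter> (\<Union>a. first_hitting \<gamma> \<beta> a) = {}"
    unfolding avoiding_def first_hitting_def by auto
  thus ?thesis
    by (simp add: avoiding_Un_first_hitting[symmetric, of \<gamma> \<beta>] M_omega_on_Un_disjoint
        M_omega_on_UN_disjoint first_hitting_disjoint)
qed

lemma M_omega_on_first_hitting:
  "i \<in> {1..n} \<Longrightarrow> M_omega_on (\<gamma> @ \<beta>) i (first_hitting (\<gamma> @ \<beta>) \<beta> a) w
     = m_act cs n (M_pow cs n M a \<gamma> []) (\<lambda>k. M_omega_on \<beta> k UNIV) i w"
proof (induction a arbitrary: \<gamma> i w)
  case 0
  thus ?case
    by (cases "\<gamma> = []")
       (simp_all add: first_hitting_def M_one_def m_act_one M_omega_on_empty m_zero_def s_zero_def m_act_zero_left)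
next
  case (Suc a)
  note i = Suc.prems
  show ?case
  proof (cases "\<gamma> = []")
    case True
    have "first_hitting ([] @ \<beta>) \<beta> (Suc a) = {}" unfolding first_hitting_def by auto
    moreover have "m_act cs n (M_pow cs n M (Suc a) [] []) z i w = 0" for z
      by (rule m_act_zero_left) (use M_pow_Suc_from_Nil i in blast)
    ultimately show ?thesis using True by (simp add: M_omega_on_empty)
  next
    case False
    have "{\<pi>s. \<rho> ## \<pi>s \<in> first_hitting (\<gamma> @ \<beta>) \<beta> (Suc a)} = first_hitting \<rho> \<beta> a" for \<rho>
      using False unfolding first_hitting_def by (auto simp: less_Suc_eq_0_disj)
    hence "M_omega_on (\<gamma> @ \<beta>) i (first_hitting (\<gamma> @ \<beta>) \<beta> (Suc a)) w
        = gsum cs (\<lambda>\<rho>. \<Sum>k\<in>{1..n}. s_act cs (M (\<gamma> @ \<beta>) \<rho> i k) (M_omega_on \<rho> k (first_hitting \<rho> \<beta> a)) w) UNIV"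
      by (simp add: M_omega_on_first_step[of _ _ "first_hitting _ _ _"])
    also have "\<dots> = gsum cs (\<lambda>\<sigma>. \<Sum>k\<in>{1..n}. s_act cs (M \<gamma> \<sigma> i k)
                       (M_omega_on (\<sigma> @ \<beta>) k (first_hitting (\<sigma> @ \<beta>) \<beta> a)) w) UNIV"
      by (rule gsum_successors_append[OF False i]) (simp add: s_act_zero_left)
    also have "\<dots> = gsum cs (\<lambda>\<sigma>. m_act cs n (M \<gamma> \<sigma>)
                       (m_act cs n (M_pow cs n M a \<sigma> []) (\<lambda>k. M_omega_on \<beta> k UNIV)) i w) UNIV"
      unfolding m_act_def[of cs n "M \<gamma> _"]
      by (intro gsum_cong sum.cong arg_cong[where f = "\<lambda>z. s_act cs _ z w"] ext Suc.IH) simp_all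
    also have "\<dots> = m_act cs n (M_pow cs n M (Suc a) \<gamma> []) (\<lambda>k. M_omega_on \<beta> k UNIV) i w"
      by (rule M_pow_Suc_act[OF i, symmetric])
    finally show ?thesis .
  qed
qed

lemma M_omega_on_append:
  assumes "\<gamma> \<noteq> []" "i \<in> {1..n}"
  shows "M_omega_on (\<gamma> @ \<beta>) i UNIV w
       = M_omega_on \<gamma> i UNIV w + m_act cs n (M_star cs n M \<gamma> []) (\<lambda>k. M_omega_on \<beta> k UNIV) i w"
proof -
  have "M_omega_on (\<gamma> @ \<beta>) i UNIV w = M_omega_on (\<gamma> @ \<beta>) i (avoiding (\<gamma> @ \<beta>) \<beta>) w
      + gsum cs (\<lambda>a. M_omega_on (\<gamma> @ \<beta>) i (first_hitting (\<gamma> @ \<beta>) \<beta> a) w) UNIV"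
    by (rule M_omega_on_split_first_hitting)
  also have "\<dots> = M_omega_on \<gamma> i UNIV w
      + gsum cs (\<lambda>a. m_act cs n (M_pow cs n M a \<gamma> []) (\<lambda>k. M_omega_on \<beta> k UNIV) i w) UNIV"
    by (simp add: M_omega_on_avoiding_suffix[OF assms] M_omega_on_first_hitting[OF assms(2)])
  finally show ?thesis unfolding M_star_def by (simp add: m_act_gsum_left)
qed

lemma M_omega_on_eq_sum_prefixes:
  "k \<in> {1..n} \<Longrightarrow> M_omega_on \<rho> k UNIV w =
     (\<Sum>j<length \<rho>. m_act cs n (m_prod n (map (\<lambda>p. M_star cs n M [p] []) (take j \<rho>)))
                        (\<lambda>k'. M_omega_on [\<rho> ! j] k' UNIV) k w)"
proof (induction \<rho> arbitrary: k w)
  case Nil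
  thus ?case using M_omega_on_pd_runs[OF Nil.prems, of "[]" UNIV w] by (simp add: pd_runs_Nil M_omega_on_empty)
next
  case (Cons q \<beta>)
  define x where "x = (\<lambda>p. M_star cs n M [p] [])"
  have "M_omega_on ([q] @ \<beta>) k UNIV w = M_omega_on [q] k UNIV w + m_act cs n (x q) (\<lambda>k. M_omega_on \<beta> k UNIV) k w"
    unfolding x_def by (rule M_omega_on_append) (use Cons.prems in auto)
  also have "m_act cs n (x q) (\<lambda>k. M_omega_on \<beta> k UNIV) k w
     = (\<Sum>j<length \<beta>. m_act cs n (m_prod n (map x (take (Suc j) (q # \<beta>)))) (\<lambda>k'. M_omega_on [(q # \<beta>) ! Suc j] k' UNIV) k w)"
  proof -
    have "m_act cs n (x q) (\<lambda>k. M_omega_on \<beta> k UNIV) k w = m_act cs n (x q) (\<lambda>k' w'. \<Sum>j<length \<beta>.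
            m_act cs n (m_prod n (map x (take j \<beta>))) (\<lambda>k'. M_omega_on [\<beta> ! j] k' UNIV) k' w') k w"
      by (rule fun_cong[OF m_act_cong]) (auto intro!: ext simp: Cons.IH x_def)
    thus ?thesis by (simp add: m_act_sum_right m_act_assoc m_prod_def)
  qed
  also have "M_omega_on [q] k UNIV w = m_act cs n (m_prod n (map x (take 0 (q # \<beta>)))) (\<lambda>k'. M_omega_on [(q # \<beta>) ! 0] k' UNIV) k w"
    by (simp add: m_prod_def m_act_one[OF Cons.prems])
  finally show ?case unfolding x_def by (simp add: sum.lessThan_Suc_shift del: sum.lessThan_Suc)
qed

lemma M_omega_single_unfold:
  assumes i: "i \<in> {1..n}"
  shows "M_omega cs ip n l M [p] i w = gsum cs (\<lambda>\<pi>. \<Sum>k\<in>{1..n}. s_act cs (M [p] \<pi> i k)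
           (\<lambda>w'. \<Sum>j<length \<pi>. m_act cs n (m_prod n (map (\<lambda>p. M_star cs n M [p] []) (take j \<pi>)))
                                  (M_omega cs ip n l M [\<pi> ! j]) k w') w) {\<pi>. \<pi> \<noteq> []}"
    (is "_ = ?rhs")
proof -
  have M_omega: "M_omega cs ip n l M \<rho> = (\<lambda>k w. M_omega_on \<rho> k UNIV w)" for \<rho>
    by (intro ext) (simp add: M_omega_eq_M_omega_on)
  have "M_omega cs ip n l M [p] i w
      = gsum cs (\<lambda>\<rho>. \<Sum>k\<in>{1..n}. s_act cs (M [p] \<rho> i k) (M_omega_on \<rho> k UNIV) w) UNIV"
    by (simp add: M_omega_eq_M_omega_on M_omega_on_first_step[of "[p]" i UNIV])
  also have "\<dots> = gsum cs (\<lambda>\<rho>. \<Sum>k\<in>{1..n}. s_act cs (M [p] \<rho> i k) (M_omega_on \<rho> k UNIV) w) {\<pi>. \<pi> \<noteq> []}"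
    by (rule gsum_mono_neutral) (auto intro!: sum.neutral s_act_zero_right simp: M_omega_on_eq_sum_prefixes)
  also have "\<dots> = ?rhs"
    by (rule gsum_cong)
       (auto intro!: sum.cong arg_cong[where f = "\<lambda>z. s_act cs _ z w"] ext
             simp: M_omega_on_eq_sum_prefixes M_omega)
  finally show ?thesis .
qed

end

theorem corollary12:
  fixes cs :: "'s::semiring_1 csum_op" and ip :: "(nat \<Rightarrow> 's) \<Rightarrow> 's"
    and n l :: nat
    and M :: "'g::finite list \<Rightarrow> 'g list \<Rightarrow> nat \<Rightarrow> nat \<Rightarrow> 'a::finite list \<Rightarrow> 's"
    and I P :: "nat \<Rightarrow> 'a list \<Rightarrow> 's" and p0 :: 'g
    and x0 :: "'a list \<Rightarrow> 's" and x :: "'g \<Rightarrow> ('a, 's) blk"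
    and z0 :: "(nat \<Rightarrow> 'a) \<Rightarrow> 's" and z :: "'g \<Rightarrow> nat \<Rightarrow> (nat \<Rightarrow> 'a) \<Rightarrow> 's"
  assumes "complete_star_omega_semiring cs ip"
    and "omega_pda n M I P p0 l"
  defines "x0 \<equiv> rc_mult n (r_mult n I (M_star cs n M [p0] [])) P"
    and "x \<equiv> \<lambda>p. M_star cs n M [p] []"
    and "z0 \<equiv> r_act cs n I (M_omega cs ip n l M [p0])"
    and "z \<equiv> \<lambda>p. M_omega cs ip n l M [p]"
  shows "x0 = rc_mult n (r_mult n I (x p0)) P
    \<and> (\<forall>p. blk_eq n (x p)
           (\<lambda>i j w. gsum cs (\<lambda>\<pi>. m_mult n (M [p] \<pi>) (m_prod n (map x \<pi>)) i j w) UNIV))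
    \<and> z0 = r_act cs n I (z p0)
    \<and> (\<forall>p. \<forall>i\<in>{1..n}. z p i =
           (\<lambda>w. gsum cs (\<lambda>\<pi>. \<Sum>k\<in>{1..n}. s_act cs (M [p] \<pi> i k)
                   (\<lambda>w'. \<Sum>j<length \<pi>. m_act cs n (m_prod n (map x (take j \<pi>))) (z (\<pi> ! j)) k w') w)
                 {\<pi>. \<pi> \<noteq> []}))"
proof -
  interpret omega_pushdown cs n M ip l
  proof unfold_locales
    show "complete_semiring cs"
      using assms(1) unfolding complete_star_omega_semiring_def by blast
    show "pushdown_matrix n M"
      using assms(2) unfolding omega_pda_def by blast
    show "ip s = s 0 * ip (\<lambda>j. s (Suc j))" for s
      using assms(1) unfolding complete_star_omega_semiring_def by blast
  qed
  show ?thesis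
    unfolding assms(3-6) blk_eq_def
    by (auto intro!: ext M_star_single_Nil simp: M_omega_single_unfold)
qed

end
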